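(* For every simplicial set $X$, the canonical simplicial map $\mathrm{ESd}\,X\to\mathrm{ESd}'X$ is inner anodyne.
   Context: Work classically. $\Delta$ is the simplex category of finite ordinals $[n]$, $n\ge0$. $\mathrm{ESd}\colon\mathrm{sSet}\to\mathrm{sSet}$ is precomposition with the functor $\Delta\to\Delta$, $[n]\mapsto[n]\star[n]=[2n+1]$, $\alpha\mapsto\alpha\star\alpha$; so $(\mathrm{ESd}\,X)_n=X_{2n+1}$. $\mathrm{ESd}'\colon\mathrm{sSet}\to\mathrm{sSet}$ is the left Kan extension along the Yoneda embedding $\Delta\to\mathrm{sSet}$ of $[n]\mapsto N(\mathrm{Fun}([1],[n]))$, the nerve of the poset of pairs $(a\le b)$ in $[n]$ with the product order. The canonical map is the unique colimit-compatible natural transformation which on $X=\Delta^n$ sends a $k$-simplex $f\colon[2k+1]\to[n]$ of $\mathrm{ESd}\,\Delta^n$ to the $k$-simplex $i\mapsto(f(i),f(k+1+i))$ of $N(\mathrm{Fun}([1],[n]))$ (natural in $[n]$). A map of simplicial sets is inner anodyne if it has the left lifting property against all inner fibrations (maps with the right lifting property against the inner horn inclusions $\Lambda^n_k\hookrightarrow\Delta^n$, $0<k<n$). *)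

theory Defs
  imports Main
begin

text \<open>A morphism [n] -> [m] of the simplex category is represented extensionally as a
monotone function nat => nat mapping {0..n} into {0..m} and sending every i > n to 0.\<close>

definition mor :: "nat \<Rightarrow> nat \<Rightarrow> (nat \<Rightarrow> nat) \<Rightarrow> bool" where
  "mor n m \<alpha> \<longleftrightarrow> (\<forall>i\<le>n. \<alpha> i \<le> m) \<and> (\<forall>i j. i \<le> j \<and> j \<le> n \<longrightarrow> \<alpha> i \<le> \<alpha> j)
     \<and> (\<forall>i. n < i \<longrightarrow> \<alpha> i = 0)"

definition idm :: "nat \<Rightarrow> nat \<Rightarrow> nat" where
  "idm n = (\<lambda>i. if i \<le> n then i else 0)"

definition cmp :: "nat \<Rightarrow> (nat \<Rightarrow> nat) \<Rightarrow> (nat \<Rightarrow> nat) \<Rightarrow> nat \<Rightarrow> nat" where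
  "cmp n \<beta> \<alpha> = (\<lambda>i. if i \<le> n then \<beta> (\<alpha> i) else 0)"

text \<open>sc X n is the set of n-simplices; for alpha : [n] -> [m] and x an m-simplex,
sm X n m alpha x is the n-simplex X(alpha)(x).\<close>

record 'a sset =
  sc :: "nat \<Rightarrow> 'a set"
  sm :: "nat \<Rightarrow> nat \<Rightarrow> (nat \<Rightarrow> nat) \<Rightarrow> 'a \<Rightarrow> 'a"

definition sset :: "'a sset \<Rightarrow> bool" where
  "sset X \<longleftrightarrow>
     (\<forall>n m \<alpha> x. mor n m \<alpha> \<and> x \<in> sc X m \<longrightarrow> sm X n m \<alpha> x \<in> sc X n) \<and>
     (\<forall>n x. x \<in> sc X n \<longrightarrow> sm X n n (idm n) x = x) \<and>
     (\<forall>n m p \<alpha> \<beta> x. mor n m \<alpha> \<and> mor m p \<beta> \<and> x \<in> sc X p \<longrightarrow>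
        sm X n m \<alpha> (sm X m p \<beta> x) = sm X n p (cmp n \<beta> \<alpha>) x)"

definition sset_map :: "'a sset \<Rightarrow> 'b sset \<Rightarrow> (nat \<Rightarrow> 'a \<Rightarrow> 'b) \<Rightarrow> bool" where
  "sset_map X Y f \<longleftrightarrow>
     (\<forall>n x. x \<in> sc X n \<longrightarrow> f n x \<in> sc Y n) \<and>
     (\<forall>n m \<alpha> x. mor n m \<alpha> \<and> x \<in> sc X m \<longrightarrow> f n (sm X n m \<alpha> x) = sm Y n m \<alpha> (f m x))"

definition simplex :: "nat \<Rightarrow> (nat \<Rightarrow> nat) sset" where
  "simplex n = \<lparr> sc = (\<lambda>j. {\<alpha>. mor j n \<alpha>}), sm = (\<lambda>j k \<beta> \<alpha>. cmp j \<alpha> \<beta>) \<rparr>"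

definition horn :: "nat \<Rightarrow> nat \<Rightarrow> (nat \<Rightarrow> nat) sset" where
  "horn n k = \<lparr> sc = (\<lambda>j. {\<alpha>. mor j n \<alpha> \<and> (\<exists>i\<le>n. i \<noteq> k \<and> i \<notin> \<alpha> ` {0..j})}),
                sm = (\<lambda>j l \<beta> \<alpha>. cmp j \<alpha> \<beta>) \<rparr>"

text \<open>i : A -> X has the left lifting property against p : E -> B
(all maps are compared on simplices only).\<close>
definition llp :: "'a sset \<Rightarrow> 'x sset \<Rightarrow> (nat \<Rightarrow> 'a \<Rightarrow> 'x) \<Rightarrow>
                   'e sset \<Rightarrow> 'b sset \<Rightarrow> (nat \<Rightarrow> 'e \<Rightarrow> 'b) \<Rightarrow> bool" where
  "llp A X i E B p \<longleftrightarrow>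
     (\<forall>u v. sset_map A E u \<and> sset_map X B v \<and>
            (\<forall>n a. a \<in> sc A n \<longrightarrow> p n (u n a) = v n (i n a)) \<longrightarrow>
        (\<exists>w. sset_map X E w \<and>
             (\<forall>n a. a \<in> sc A n \<longrightarrow> w n (i n a) = u n a) \<and>
             (\<forall>n x. x \<in> sc X n \<longrightarrow> p n (w n x) = v n x)))"

text \<open>The horn inclusion Lambda^n_k -> Delta^n is the identity on simplices.\<close>
definition inner_fibration :: "'e sset \<Rightarrow> 'b sset \<Rightarrow> (nat \<Rightarrow> 'e \<Rightarrow> 'b) \<Rightarrow> bool" where
  "inner_fibration E B p \<longleftrightarrow> sset E \<and> sset B \<and> sset_map E B p \<and>
     (\<forall>n k. 0 < k \<and> k < n \<longrightarrow> llp (horn n k) (simplex n) (\<lambda>j \<alpha>. \<alpha>) E B p)"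

text \<open>alpha * alpha : [2n+1] -> [2m+1] for alpha : [n] -> [m]\<close>
definition join_self :: "nat \<Rightarrow> nat \<Rightarrow> (nat \<Rightarrow> nat) \<Rightarrow> nat \<Rightarrow> nat" where
  "join_self n m \<alpha> = (\<lambda>i. if i \<le> n then \<alpha> i
                          else if i \<le> 2*n+1 then m + 1 + \<alpha> (i - (n+1)) else 0)"

definition ESd :: "'a sset \<Rightarrow> 'a sset" where
  "ESd X = \<lparr> sc = (\<lambda>n. sc X (2*n+1)),
             sm = (\<lambda>n m \<alpha> x. sm X (2*n+1) (2*m+1) (join_self n m \<alpha>) x) \<rparr>"

section \<open>ESd' as the left Kan extension (coend formula)\<close>

text \<open>k-simplices of N(Fun([1],[m])): chains of pairs (a_i <= b_i), i = 0..k, monotone in the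
product order; extensional (value (0,0) beyond k).\<close>
definition nsimp :: "nat \<Rightarrow> nat \<Rightarrow> (nat \<Rightarrow> nat \<times> nat) \<Rightarrow> bool" where
  "nsimp k m \<sigma> \<longleftrightarrow> (\<forall>i\<le>k. fst (\<sigma> i) \<le> snd (\<sigma> i) \<and> snd (\<sigma> i) \<le> m) \<and>
     (\<forall>i j. i \<le> j \<and> j \<le> k \<longrightarrow> fst (\<sigma> i) \<le> fst (\<sigma> j) \<and> snd (\<sigma> i) \<le> snd (\<sigma> j)) \<and>
     (\<forall>i. k < i \<longrightarrow> \<sigma> i = (0, 0))"

text \<open>covariant action of alpha : [m] -> [m'] on N(Fun([1],[m]))_k\<close>
definition post :: "nat \<Rightarrow> (nat \<Rightarrow> nat) \<Rightarrow> (nat \<Rightarrow> nat \<times> nat) \<Rightarrow> nat \<Rightarrow> nat \<times> nat" where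
  "post k \<alpha> \<sigma> = (\<lambda>i. if i \<le> k then (\<alpha> (fst (\<sigma> i)), \<alpha> (snd (\<sigma> i))) else (0, 0))"

text \<open>contravariant (simplicial) action of beta : [j] -> [k]\<close>
definition pre :: "nat \<Rightarrow> (nat \<Rightarrow> nat) \<Rightarrow> (nat \<Rightarrow> nat \<times> nat) \<Rightarrow> nat \<Rightarrow> nat \<times> nat" where
  "pre j \<beta> \<sigma> = (\<lambda>i. if i \<le> j then \<sigma> (\<beta> i) else (0, 0))"

type_synonym 'a etriple = "nat \<times> 'a \<times> (nat \<Rightarrow> nat \<times> nat)"

definition etriples :: "'a sset \<Rightarrow> nat \<Rightarrow> 'a etriple set" where
  "etriples X k = {(m, x, \<sigma>). x \<in> sc X m \<and> nsimp k m \<sigma>}"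

text \<open>generating relation of the coend: (m, X(alpha) x, sigma) ~ (m', x, alpha_* sigma)\<close>
definition coend_step :: "'a sset \<Rightarrow> nat \<Rightarrow> 'a etriple \<Rightarrow> 'a etriple \<Rightarrow> bool" where
  "coend_step X k s t \<longleftrightarrow> (\<exists>m m' \<alpha> x \<sigma>. mor m m' \<alpha> \<and> x \<in> sc X m' \<and> nsimp k m \<sigma> \<and>
       s = (m, sm X m m' \<alpha> x, \<sigma>) \<and> t = (m', x, post k \<alpha> \<sigma>))"

definition coend_eq :: "'a sset \<Rightarrow> nat \<Rightarrow> 'a etriple \<Rightarrow> 'a etriple \<Rightarrow> bool" where
  "coend_eq X k = (\<lambda>s t. coend_step X k s t \<or> coend_step X k t s)\<^sup>*\<^sup>*"

definition eclass :: "'a sset \<Rightarrow> nat \<Rightarrow> 'a etriple \<Rightarrow> 'a etriple set" where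
  "eclass X k t = {s \<in> etriples X k. coend_eq X k t s}"

definition ESd' :: "'a sset \<Rightarrow> 'a etriple set sset" where
  "ESd' X = \<lparr> sc = (\<lambda>k. eclass X k ` etriples X k),
              sm = (\<lambda>j k \<beta> c. (case (SOME t. t \<in> c) of (m, x, \<sigma>) \<Rightarrow>
                                   eclass X j (m, x, pre j \<beta> \<sigma>))) \<rparr>"

text \<open>Obtained by colimit-compatibility from the maps on Delta^n: a k-simplex y of ESd X
(i.e. y in X_(2k+1)) is the image of id_[2k+1] under y : Delta^(2k+1) -> X, and id_[2k+1]
is sent to the chain i |-> (i, k+1+i) in N(Fun([1],[2k+1])).\<close>
definition canon :: "'a sset \<Rightarrow> nat \<Rightarrow> 'a \<Rightarrow> 'a etriple set" where
  "canon X k y = eclass X k (2*k+1, y, (\<lambda>i. if i \<le> k then (i, k+1+i) else (0, 0)))"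

end

(*
  ESd' X is the coend of X_m x N(Fun([1],[m])), and the canonical map is induced by the
  embeddings of ESd(Delta^m) into N(Fun([1],[m])) as the chains of pairs (a, b) whose first
  coordinates all lie below their second coordinates. A lifting problem against an inner
  fibration is solved over the nondegenerate simplices y of X, by induction on their
  dimension m: on the cell N(Fun([1],[m])) of y the lift is already prescribed on ESd(Delta^m)
  and on the chains missing a vertex of [m] (by the lifts for the faces of y), and the
  inclusion of this subcomplex is inner anodyne, since the remaining chains can be attached
  one at a time along inner horns. By the Eilenberg-Zilber lemma the lifts of the cells are
  compatible with all simplicial operators, so they descend to the coend.
*)

theory Submission
  imports Defs "HOL-Library.Product_Lexorder" "HOL-Library.Infinite_Set"
begin

section \<open>The simplex category\<close>

lemma mor_le: "mor n m \<alpha> \<Longrightarrow> i \<le> n \<Longrightarrow> \<alpha> i \<le> m"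
  by (simp add: mor_def)

lemma mor_mono: "mor n m \<alpha> \<Longrightarrow> i \<le> j \<Longrightarrow> j \<le> n \<Longrightarrow> \<alpha> i \<le> \<alpha> j"
  by (simp add: mor_def)

lemma mor_beyond: "mor n m \<alpha> \<Longrightarrow> n < i \<Longrightarrow> \<alpha> i = 0"
  by (simp add: mor_def)

lemma mor_eqI: "mor n m \<alpha> \<Longrightarrow> mor n m' \<beta> \<Longrightarrow> (\<And>i. i \<le> n \<Longrightarrow> \<alpha> i = \<beta> i) \<Longrightarrow> \<alpha> = \<beta>"
  by (rule ext) (metis mor_beyond not_le)

lemma mor_idm: "mor n n (idm n)"
  by (simp add: mor_def idm_def)

lemma mor_cmp: "mor n m \<alpha> \<Longrightarrow> mor m p \<beta> \<Longrightarrow> mor n p (cmp n \<beta> \<alpha>)"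
  unfolding mor_def cmp_def by auto

lemma cmp_idm_left: "mor n m \<alpha> \<Longrightarrow> cmp n (idm m) \<alpha> = \<alpha>"
  by (rule ext) (auto simp: cmp_def idm_def mor_def)

lemma cmp_idm_right: "mor n m \<alpha> \<Longrightarrow> cmp n \<alpha> (idm n) = \<alpha>"
  by (rule ext) (auto simp: cmp_def idm_def mor_def)

lemma cmp_apply: "i \<le> n \<Longrightarrow> cmp n \<beta> \<alpha> i = \<beta> (\<alpha> i)"
  by (simp add: cmp_def)

lemma cmp_image: "cmp n \<beta> \<alpha> ` {0..n} = \<beta> ` \<alpha> ` {0..n}"
  unfolding cmp_def by auto

lemma sset_sm_closed: "sset X \<Longrightarrow> mor n m \<alpha> \<Longrightarrow> x \<in> sc X m \<Longrightarrow> sm X n m \<alpha> x \<in> sc X n"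
  by (simp add: sset_def)

lemma sset_sm_idm: "sset X \<Longrightarrow> x \<in> sc X n \<Longrightarrow> sm X n n (idm n) x = x"
  by (simp add: sset_def)

lemma sset_sm_cmp: "sset X \<Longrightarrow> mor n m \<alpha> \<Longrightarrow> mor m p \<beta> \<Longrightarrow> x \<in> sc X p \<Longrightarrow>
    sm X n m \<alpha> (sm X m p \<beta> x) = sm X n p (cmp n \<beta> \<alpha>) x"
  by (simp add: sset_def)

definition index_in :: "'a::wellorder set \<Rightarrow> 'a \<Rightarrow> nat" where
  "index_in V v = card {u\<in>V. u < v}"

lemma finite_enumerate_le_iff:
  "finite V \<Longrightarrow> i < card V \<Longrightarrow> j < card V \<Longrightarrow> enumerate V i \<le> enumerate V j \<longleftrightarrow> i \<le> j"
  by (metis finite_enumerate_mono_iff not_le)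

lemma index_in_enumerate:
  assumes V: "finite V" and i: "i < card V"
  shows "index_in V (enumerate V i) = i"
proof -
  have "{u\<in>V. u < enumerate V i} = enumerate V ` {..<i}"
    using finite_enumerate_Ex[OF V] finite_enumerate_in_set[OF V] i
    by (force simp: V)
  moreover have "{..<i} \<subseteq> {..<card V}" using i by auto
  then have "inj_on (enumerate V) {..<i}"
    by (rule inj_on_subset[OF bij_betw_imp_inj_on[OF finite_bij_enumerate[OF V]]])
  ultimately show ?thesis
    unfolding index_in_def by (simp add: card_image)
qed

lemma enumerate_index_in: "finite V \<Longrightarrow> v \<in> V \<Longrightarrow> enumerate V (index_in V v) = v"
  by (metis finite_enumerate_Ex index_in_enumerate)

lemma index_in_less_card: "finite V \<Longrightarrow> v \<in> V \<Longrightarrow> index_in V v < card V"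
  by (metis finite_enumerate_Ex index_in_enumerate)

lemma index_in_mono: "finite V \<Longrightarrow> u \<le> v \<Longrightarrow> index_in V u \<le> index_in V v"
  unfolding index_in_def by (rule card_mono) auto

lemma index_in_strict_mono: "finite V \<Longrightarrow> u \<in> V \<Longrightarrow> u < v \<Longrightarrow> index_in V u < index_in V v"
  unfolding index_in_def by (rule psubset_card_mono) auto

lemma index_in_inj: "finite V \<Longrightarrow> u \<in> V \<Longrightarrow> v \<in> V \<Longrightarrow> index_in V u = index_in V v \<Longrightarrow> u = v"
  by (metis enumerate_index_in)

definition surj_mor :: "nat \<Rightarrow> nat \<Rightarrow> (nat \<Rightarrow> nat) \<Rightarrow> bool" where
  "surj_mor n m s \<longleftrightarrow> mor n m s \<and> (\<forall>j\<le>m. \<exists>i\<le>n. s i = j)"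

definition inj_mor :: "nat \<Rightarrow> nat \<Rightarrow> (nat \<Rightarrow> nat) \<Rightarrow> bool" where
  "inj_mor n m d \<longleftrightarrow> mor n m d \<and> (\<forall>i j. i < j \<and> j \<le> n \<longrightarrow> d i < d j)"

lemma surj_mor_mor: "surj_mor n m s \<Longrightarrow> mor n m s"
  by (simp add: surj_mor_def)

lemma inj_mor_mor: "inj_mor n m d \<Longrightarrow> mor n m d"
  by (simp add: inj_mor_def)

lemma surj_mor_idm: "surj_mor n n (idm n)"
  unfolding surj_mor_def by (intro conjI mor_idm) (auto simp: idm_def)

lemma surj_mor_image: "surj_mor n m s \<Longrightarrow> s ` {0..n} = {0..m}"
  unfolding surj_mor_def mor_def by force

lemma inj_mor_step: "inj_mor n m d \<Longrightarrow> i + k \<le> n \<Longrightarrow> d i + k \<le> d (i + k)"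
proof (induction k)
  case 0 then show ?case by simp
next
  case (Suc k)
  then have "d (i + k) < d (i + Suc k)" unfolding inj_mor_def by simp
  with Suc show ?case by simp
qed

lemma inj_mor_ge: "inj_mor n m d \<Longrightarrow> i \<le> n \<Longrightarrow> i \<le> d i"
  using inj_mor_step[of n m d 0 i] by simp

lemma inj_mor_dim_le: "inj_mor n m d \<Longrightarrow> n \<le> m"
  by (meson inj_mor_def inj_mor_ge le_trans mor_le order_refl)

lemma inj_mor_endo: assumes "inj_mor n n d" shows "d = idm n"
proof (rule mor_eqI[OF inj_mor_mor[OF assms] mor_idm])
  fix i assume i: "i \<le> n"
  have "d i + (n - i) \<le> d n" using inj_mor_step[OF assms, of i "n - i"] i by simp
  moreover have "d n \<le> n" using assms inj_mor_mor mor_le by blast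
  moreover have "i \<le> d i" using inj_mor_ge[OF assms i] .
  ultimately show "d i = idm n i" using i by (simp add: idm_def)
qed

lemma surj_mor_dim_le: assumes "surj_mor n m s" shows "m \<le> n"
proof -
  have "card {0..m} \<le> card {0..n}"
    using surj_mor_image[OF assms] card_image_le[of "{0..n}" s] by simp
  then show ?thesis by simp
qed

lemma surj_mor_endo: assumes "surj_mor n n s" shows "s = idm n"
proof -
  have img: "s ` {0..n} = {0..n}" using surj_mor_image[OF assms] .
  then have inj: "inj_on s {0..n}"
    by (simp add: eq_card_imp_inj_on)
  have "inj_mor n n s" unfolding inj_mor_def
  proof (intro conjI allI impI)
    show "mor n n s" using assms surj_mor_mor by blast
    fix i j assume "i < j \<and> j \<le> n"
    then have "s i \<le> s j" "s i \<noteq> s j"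
      using mor_mono[OF surj_mor_mor[OF assms], of i j] inj_onD[OF inj, of i j] by auto
    then show "s i < s j" by simp
  qed
  then show ?thesis by (rule inj_mor_endo)
qed

lemma surj_mor_cmp: "surj_mor n m \<alpha> \<Longrightarrow> surj_mor m p \<beta> \<Longrightarrow> surj_mor n p (cmp n \<beta> \<alpha>)"
  unfolding surj_mor_def using mor_cmp cmp_apply by metis

definition enum_mor :: "nat set \<Rightarrow> nat \<Rightarrow> nat" where
  "enum_mor V i = (if i < card V then enumerate V i else 0)"

lemma inj_mor_enum_mor:
  assumes V: "finite V" "V \<noteq> {}" "V \<subseteq> {0..m}"
  shows "inj_mor (card V - 1) m (enum_mor V)"
proof -
  have "0 < card V" using V(1,2) by (simp add: card_gt_0_iff)
  then have card: "i \<le> card V - 1 \<longleftrightarrow> i < card V" for i by linarith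
  show ?thesis
    unfolding inj_mor_def mor_def enum_mor_def card
  proof (intro conjI allI impI)
    show "(if i < card V then enumerate V i else 0) \<le> m" if "i < card V" for i
      using finite_enumerate_in_set[OF V(1) that] V(3) that by auto
    show "(if i < card V then enumerate V i else 0) \<le> (if j < card V then enumerate V j else 0)"
      if "i \<le> j \<and> j < card V" for i j
      using finite_enumerate_le_iff[OF V(1)] that by auto
    show "(if i < card V then enumerate V i else 0) < (if j < card V then enumerate V j else 0)"
      if "i < j \<and> j < card V" for i j
      using finite_enumerate_mono[OF _ V(1)] that by auto
  qed (simp add: card[symmetric])
qed

lemma inj_mor_inj_on: "inj_mor r m d \<Longrightarrow> inj_on d {0..r}"
  unfolding inj_mor_def by (intro inj_onI) (metis atLeastAtMost_iff linorder_neqE less_irrefl)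

lemma card_inj_mor_image: "inj_mor r m d \<Longrightarrow> card (d ` {0..r}) = Suc r"
  by (simp add: card_image inj_mor_inj_on)

lemma inj_mor_eq_enum_mor:
  assumes d: "inj_mor r m d"
  shows "d = enum_mor (d ` {0..r})"
proof -
  let ?V = "d ` {0..r}"
  have "index_in ?V (d i) = i" if i: "i \<le> r" for i
  proof -
    have "{u \<in> ?V. u < d i} = d ` {0..<i}"
    proof (intro equalityI subsetI)
      fix u assume "u \<in> {u \<in> ?V. u < d i}"
      then obtain j where j: "j \<le> r" "u = d j" "d j < d i" by auto
      then have "j < i" using mor_mono[OF inj_mor_mor[OF d], of i j] by (meson not_le not_less)
      then show "u \<in> d ` {0..<i}" using j by auto
    next
      fix u assume "u \<in> d ` {0..<i}"
      then show "u \<in> {u \<in> ?V. u < d i}" using d i unfolding inj_mor_def by auto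
    qed
    moreover have "{0..<i} \<subseteq> {0..r}" using i by auto
    then have "inj_on d {0..<i}" by (rule inj_on_subset[OF inj_mor_inj_on[OF d]])
    ultimately show ?thesis unfolding index_in_def by (simp add: card_image)
  qed
  show ?thesis
  proof (rule ext)
    fix i
    show "d i = enum_mor ?V i"
    proof (cases "i \<le> r")
      case True
      then have "enumerate ?V i = enumerate ?V (index_in ?V (d i))"
        using \<open>\<And>i. i \<le> r \<Longrightarrow> index_in ?V (d i) = i\<close> by simp
      also have "\<dots> = d i" using True by (intro enumerate_index_in) auto
      finally show ?thesis
        using True card_inj_mor_image[OF d] by (simp add: enum_mor_def)
    next
      case False
      then show ?thesis
        using card_inj_mor_image[OF d] mor_beyond[OF inj_mor_mor[OF d]] by (simp add: enum_mor_def)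
    qed
  qed
qed

lemma inj_mor_unique:
  assumes "inj_mor r m d" "inj_mor r' m' d'" "d ` {0..r} = d' ` {0..r'}"
  shows "r = r' \<and> d = d'"
  using card_inj_mor_image[OF assms(1)] card_inj_mor_image[OF assms(2)] assms
    inj_mor_eq_enum_mor[OF assms(1)] inj_mor_eq_enum_mor[OF assms(2)]
  by simp

lemma mor_surj_inj_factor:
  assumes h: "mor n m h"
  obtains r e d where "surj_mor n r e" "inj_mor r m d" "h = cmp n d e"
proof -
  define V where "V = h ` {0..n}"
  have V: "finite V" "V \<noteq> {}" "V \<subseteq> {0..m}"
    using mor_le[OF h] unfolding V_def by auto
  define r where "r = card V - 1"
  have card: "card V = Suc r" using V by (simp add: r_def card_gt_0_iff)
  define e where "e i = (if i \<le> n then index_in V (h i) else 0)" for i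
  have hV: "i \<le> n \<Longrightarrow> h i \<in> V" for i unfolding V_def by auto
  have "surj_mor n r e"
    unfolding surj_mor_def mor_def
  proof (intro conjI allI impI)
    show "e i \<le> r" if "i \<le> n" for i
      using index_in_less_card[OF V(1) hV[OF that]] that card by (simp add: e_def)
    show "e i \<le> e j" if "i \<le> j \<and> j \<le> n" for i j
      using index_in_mono[OF V(1) mor_mono[OF h]] that by (simp add: e_def)
    show "\<exists>i\<le>n. e i = j" if "j \<le> r" for j
    proof -
      have "enumerate V j \<in> h ` {0..n}"
        using finite_enumerate_in_set[OF V(1), of j] that card unfolding V_def by simp
      then obtain i where i: "i \<le> n" "h i = enumerate V j" by auto
      have "index_in V (enumerate V j) = j"
        using index_in_enumerate[OF V(1), of j] that card by simp
      with i show ?thesis by (intro exI[of _ i]) (simp add: e_def)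
    qed
  qed (simp add: e_def)
  moreover have "h = cmp n (enum_mor V) e"
    using enumerate_index_in[OF V(1) hV] index_in_less_card[OF V(1) hV] mor_beyond[OF h]
    by (intro ext) (auto simp: cmp_def enum_mor_def e_def)
  ultimately show thesis
    using that inj_mor_enum_mor[OF V] by (simp add: r_def)
qed

lemma surj_mor_section:
  assumes s: "surj_mor n m s" and i: "i \<le> n"
  shows "\<exists>d. mor m n d \<and> cmp m s d = idm m \<and> d (s i) = i"
proof -
  have sm: "mor n m s" using s surj_mor_mor by blast
  define d where "d = (\<lambda>v. if v \<le> m then (if v = s i then i else (LEAST j. s j = v)) else 0)"
  have key: "\<And>v. v \<le> m \<Longrightarrow> d v \<le> n \<and> s (d v) = v"
  proof -
    fix v assume v: "v \<le> m"
    show "d v \<le> n \<and> s (d v) = v"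
    proof (cases "v = s i")
      case True then show ?thesis using v i by (simp add: d_def)
    next
      case False
      obtain j where j: "j \<le> n" "s j = v" using s v unfolding surj_mor_def by blast
      have "(LEAST j. s j = v) \<le> j" by (rule Least_le) (simp add: j)
      moreover have "s (LEAST j. s j = v) = v" by (rule LeastI) (rule j(2))
      ultimately show ?thesis using False v j by (simp add: d_def)
    qed
  qed
  have "mor m n d" unfolding mor_def
  proof (intro conjI allI impI)
    fix v assume "v \<le> m" then show "d v \<le> n" using key by blast
  next
    fix u v assume uv: "u \<le> v \<and> v \<le> m"
    show "d u \<le> d v"
    proof (rule ccontr)
      assume "\<not> d u \<le> d v"
      then have "s (d v) \<le> s (d u)" using mor_mono[OF sm, of "d v" "d u"] key uv by simp
      then have "v \<le> u" using key uv by simp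
      then have "u = v" using uv by simp
      then show False using \<open>\<not> d u \<le> d v\<close> by simp
    qed
  next
    fix v assume "m < v" then show "d v = 0" by (simp add: d_def)
  qed
  moreover have "cmp m s d = idm m"
    by (rule ext) (simp add: cmp_def idm_def key)
  moreover have "d (s i) = i" using mor_le[OF sm i] by (simp add: d_def)
  ultimately show ?thesis by blast
qed

section \<open>The Eilenberg-Zilber lemma\<close>

definition degenerate :: "'a sset \<Rightarrow> nat \<Rightarrow> 'a \<Rightarrow> bool" where
  "degenerate X m x \<longleftrightarrow> (\<exists>q s y. q < m \<and> surj_mor m q s \<and> y \<in> sc X q \<and> x = sm X m q s y)"

definition nondegenerate :: "'a sset \<Rightarrow> nat \<Rightarrow> 'a \<Rightarrow> bool" where
  "nondegenerate X m y \<longleftrightarrow> y \<in> sc X m \<and> \<not> degenerate X m y"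

lemma nondegenerate_sc: "nondegenerate X q y \<Longrightarrow> y \<in> sc X q"
  by (simp add: nondegenerate_def)

lemma eilenberg_zilber_exists:
  assumes X: "sset X"
  shows "x \<in> sc X m \<Longrightarrow> \<exists>q s y. surj_mor m q s \<and> nondegenerate X q y \<and> x = sm X m q s y"
proof (induction m arbitrary: x rule: less_induct)
  case (less m)
  show ?case
  proof (cases "degenerate X m x")
    case False
    then have "nondegenerate X m x" using less.prems by (simp add: nondegenerate_def)
    then show ?thesis using surj_mor_idm sset_sm_idm[OF X less.prems] by metis
  next
    case True
    then obtain q s y where q: "q < m" "surj_mor m q s" "y \<in> sc X q" "x = sm X m q s y"
      unfolding degenerate_def by blast
    from less.IH[OF q(1) q(3)] obtain q' s' y' where
      r: "surj_mor q q' s'" "nondegenerate X q' y'" "y = sm X q q' s' y'" by blast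
    have "y' \<in> sc X q'" using r(2) by (simp add: nondegenerate_def)
    then have "x = sm X m q' (cmp m s' s) y'"
      using q(4) r(3) sset_sm_cmp[OF X surj_mor_mor[OF q(2)] surj_mor_mor[OF r(1)]] by simp
    moreover have "surj_mor m q' (cmp m s' s)" using surj_mor_cmp q(2) r(1) by blast
    ultimately show ?thesis using r(2) by blast
  qed
qed

text \<open>With d a section of s, the equation gives y = (s' o d)^* y'; as y is nondegenerate,
  s' o d has no proper surjective part.\<close>

lemma eilenberg_zilber_section_inj_mor:
  assumes X: "sset X"
    and s: "surj_mor m q s" and y: "nondegenerate X q y" and s': "surj_mor m q' s'" and y': "nondegenerate X q' y'"
    and eq: "sm X m q s y = sm X m q' s' y'"
    and d: "mor q m d" "cmp q s d = idm q"
  shows "inj_mor q q' (cmp q s' d) \<and> y = sm X q q' (cmp q s' d) y'"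
proof -
  have ysc: "y \<in> sc X q" and y'sc: "y' \<in> sc X q'" using y y' by (simp_all add: nondegenerate_def)
  have h: "mor q q' (cmp q s' d)" using mor_cmp[OF d(1) surj_mor_mor[OF s']] .
  have yeq: "y = sm X q q' (cmp q s' d) y'"
  proof -
    have "y = sm X q q (idm q) y" using sset_sm_idm[OF X ysc] by simp
    also have "\<dots> = sm X q m d (sm X m q s y)"
      using sset_sm_cmp[OF X d(1) surj_mor_mor[OF s] ysc] d(2) by simp
    also have "\<dots> = sm X q m d (sm X m q' s' y')" using eq by simp
    also have "\<dots> = sm X q q' (cmp q s' d) y'"
      using sset_sm_cmp[OF X d(1) surj_mor_mor[OF s'] y'sc] by simp
    finally show ?thesis .
  qed
  obtain r e \<delta> where f: "surj_mor q r e" "inj_mor r q' \<delta>" "cmp q s' d = cmp q \<delta> e"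
    using mor_surj_inj_factor[OF h] by blast
  have "r \<le> q" using surj_mor_dim_le[OF f(1)] .
  moreover have "\<not> r < q"
  proof
    assume rq: "r < q"
    have "y = sm X q r e (sm X r q' \<delta> y')"
      using yeq f(3) sset_sm_cmp[OF X surj_mor_mor[OF f(1)] inj_mor_mor[OF f(2)] y'sc] by simp
    moreover have "sm X r q' \<delta> y' \<in> sc X r" using sset_sm_closed[OF X inj_mor_mor[OF f(2)] y'sc] .
    ultimately have "degenerate X q y" unfolding degenerate_def using rq f(1) by blast
    then show False using y by (simp add: nondegenerate_def)
  qed
  ultimately have "r = q" by simp
  then have "e = idm q" using surj_mor_endo f(1) by simp
  then have "cmp q s' d = \<delta>" using f(3) cmp_idm_right[OF inj_mor_mor[OF f(2)]] \<open>r = q\<close> by simp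
  then show ?thesis using f(2) \<open>r = q\<close> yeq by simp
qed

lemma eilenberg_zilber_unique:
  assumes X: "sset X"
    and s: "surj_mor m q s" and y: "nondegenerate X q y" and s': "surj_mor m q' s'" and y': "nondegenerate X q' y'"
    and eq: "sm X m q s y = sm X m q' s' y'"
  shows "q = q' \<and> s = s' \<and> y = y'"
proof -
  obtain d where d: "mor q m d" "cmp q s d = idm q" using surj_mor_section[OF s, of 0] by blast
  obtain d' where d': "mor q' m d'" "cmp q' s' d' = idm q'" using surj_mor_section[OF s', of 0] by blast
  have A: "inj_mor q q' (cmp q s' d)" and yA: "y = sm X q q' (cmp q s' d) y'"
    using eilenberg_zilber_section_inj_mor[OF X s y s' y' eq d] by blast+
  have B: "inj_mor q' q (cmp q' s d')"
    using eilenberg_zilber_section_inj_mor[OF X s' y' s y eq[symmetric] d'] by blast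
  have qq: "q = q'" using inj_mor_dim_le[OF A] inj_mor_dim_le[OF B] by simp
  have ci: "cmp q s' d = idm q" using inj_mor_endo A qq by simp
  have y'q: "y' \<in> sc X q" using y' qq unfolding nondegenerate_def by simp
  have yy: "y = y'" using yA unfolding ci qq[symmetric] using sset_sm_idm[OF X y'q] by simp
  have "s = s'"
  proof (rule mor_eqI[OF surj_mor_mor[OF s] surj_mor_mor[OF s']])
    fix i assume i: "i \<le> m"
    obtain d2 where d2: "mor q m d2" "cmp q s d2 = idm q" "d2 (s i) = i"
      using surj_mor_section[OF s i] by blast
    have "inj_mor q q' (cmp q s' d2)" using eilenberg_zilber_section_inj_mor[OF X s y s' y' eq d2(1,2)] by blast
    then have "cmp q s' d2 = idm q" using inj_mor_endo qq by simp
    moreover have "s i \<le> q" using mor_le[OF surj_mor_mor[OF s] i] .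
    ultimately have "s' (d2 (s i)) = s i"
      using fun_cong[of "cmp q s' d2" "idm q" "s i"] cmp_apply[of "s i" q s' d2] by (simp add: idm_def)
    then show "s i = s' i" using d2(3) by simp
  qed
  with qq yy show ?thesis by simp
qed

definition ez_decomp :: "'a sset \<Rightarrow> nat \<Rightarrow> 'a \<Rightarrow> nat \<times> (nat \<Rightarrow> nat) \<times> 'a" where
  "ez_decomp X m x = (SOME t. case t of (q, s, y) \<Rightarrow> surj_mor m q s \<and> nondegenerate X q y \<and> x = sm X m q s y)"

lemma ez_decompE:
  assumes X: "sset X" and x: "x \<in> sc X m"
  obtains q s y where "ez_decomp X m x = (q, s, y)" "surj_mor m q s" "nondegenerate X q y" "x = sm X m q s y"
proof -
  obtain q s y where "surj_mor m q s" "nondegenerate X q y" "x = sm X m q s y"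
    using eilenberg_zilber_exists[OF X x] by blast
  then have "\<exists>t. case t of (q, s, y) \<Rightarrow> surj_mor m q s \<and> nondegenerate X q y \<and> x = sm X m q s y"
    by auto
  then have "case ez_decomp X m x of (q, s, y) \<Rightarrow> surj_mor m q s \<and> nondegenerate X q y \<and> x = sm X m q s y"
    unfolding ez_decomp_def by (rule someI_ex)
  then show thesis using that by (cases "ez_decomp X m x") auto
qed

lemma ez_decomp_eq:
  assumes X: "sset X" and s: "surj_mor m q s" and y: "nondegenerate X q y"
  shows "ez_decomp X m (sm X m q s y) = (q, s, y)"
proof -
  have "sm X m q s y \<in> sc X m" using sset_sm_closed[OF X surj_mor_mor[OF s] nondegenerate_sc[OF y]] .
  then obtain q' s' y' where "ez_decomp X m (sm X m q s y) = (q', s', y')" "surj_mor m q' s'"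
    "nondegenerate X q' y'" "sm X m q s y = sm X m q' s' y'"
    using ez_decompE[OF X] by blast
  then show ?thesis using eilenberg_zilber_unique[OF X s y] by metis
qed

section \<open>The nerve of the poset of pairs\<close>

definition pair_le :: "nat \<times> nat \<Rightarrow> nat \<times> nat \<Rightarrow> bool" where
  "pair_le x y \<longleftrightarrow> fst x \<le> fst y \<and> snd x \<le> snd y"

definition pairs :: "nat \<Rightarrow> (nat \<times> nat) set" where
  "pairs m = {x. fst x \<le> snd x \<and> snd x \<le> m}"

definition is_chain :: "(nat \<times> nat) set \<Rightarrow> bool" where
  "is_chain C \<longleftrightarrow> (\<forall>x\<in>C. \<forall>y\<in>C. pair_le x y \<or> pair_le y x)"

definition verts :: "nat \<Rightarrow> (nat \<Rightarrow> nat \<times> nat) \<Rightarrow> (nat \<times> nat) set" where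
  "verts k \<sigma> = \<sigma> ` {0..k}"

text \<open>A simplex of N(Fun([1],[m])) is determined by its vertex set, a chain in pairs m, so
  subcomplexes are described by families of chains and maps out of them by functions on
  the simplices nsimp k m.\<close>

definition nerve_map_on :: "'e sset \<Rightarrow> (nat \<times> (nat \<Rightarrow> nat \<times> nat)) set \<Rightarrow>
    (nat \<Rightarrow> (nat \<Rightarrow> nat \<times> nat) \<Rightarrow> 'e) \<Rightarrow> bool" where
  "nerve_map_on E S f \<longleftrightarrow> (\<forall>k \<sigma>. (k, \<sigma>) \<in> S \<longrightarrow> f k \<sigma> \<in> sc E k) \<and>
     (\<forall>k l \<beta> \<sigma>. mor l k \<beta> \<and> (k, \<sigma>) \<in> S \<longrightarrow> f l (pre l \<beta> \<sigma>) = sm E l k \<beta> (f k \<sigma>))"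

definition nerve_simplices :: "nat \<Rightarrow> (nat \<times> nat) set set \<Rightarrow> (nat \<times> (nat \<Rightarrow> nat \<times> nat)) set" where
  "nerve_simplices m F = {(k, \<sigma>). nsimp k m \<sigma> \<and> verts k \<sigma> \<in> F}"

lemma pair_le_imp_less_eq: "pair_le x y \<Longrightarrow> x \<le> y"
  by (cases x; cases y) (auto simp: pair_le_def)

lemma pair_le_refl: "pair_le a a"
  by (simp add: pair_le_def)

lemma chain_less_eq_imp_pair_le: "is_chain C \<Longrightarrow> x \<in> C \<Longrightarrow> y \<in> C \<Longrightarrow> x \<le> y \<Longrightarrow> pair_le x y"
  unfolding is_chain_def
  by (metis antisym pair_le_def pair_le_imp_less_eq order_refl)

lemma nsimp_pre: "nsimp k m \<sigma> \<Longrightarrow> mor l k \<beta> \<Longrightarrow> nsimp l m (pre l \<beta> \<sigma>)"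
  unfolding nsimp_def pre_def mor_def by auto

lemma verts_pre: "mor l k \<beta> \<Longrightarrow> verts l (pre l \<beta> \<sigma>) \<subseteq> verts k \<sigma>"
  unfolding verts_def pre_def mor_def by auto

lemma pre_pre: "mor l k \<beta> \<Longrightarrow> mor j l \<gamma> \<Longrightarrow> pre j \<gamma> (pre l \<beta> \<sigma>) = pre j (cmp j \<beta> \<gamma>) \<sigma>"
  by (rule ext) (auto simp: pre_def cmp_def mor_def)

lemma nsimp_verts_pairs: "nsimp k m \<sigma> \<Longrightarrow> verts k \<sigma> \<subseteq> pairs m"
  unfolding nsimp_def verts_def pairs_def by auto

lemma nsimp_pair_le: "nsimp k m \<sigma> \<Longrightarrow> i \<le> j \<Longrightarrow> j \<le> k \<Longrightarrow> pair_le (\<sigma> i) (\<sigma> j)"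
  unfolding nsimp_def pair_le_def by auto

lemma nsimp_verts_chain: assumes "nsimp k m \<sigma>" shows "is_chain (verts k \<sigma>)"
  unfolding is_chain_def verts_def
proof (intro ballI)
  fix a b assume "a \<in> \<sigma> ` {0..k}" "b \<in> \<sigma> ` {0..k}"
  then obtain x y where "x \<le> k" "y \<le> k" "a = \<sigma> x" "b = \<sigma> y" by auto
  then show "pair_le a b \<or> pair_le b a"
    using nsimp_pair_le[OF assms, of x y] nsimp_pair_le[OF assms, of y x] by (cases "x \<le> y") auto
qed

lemma nsimp_beyond: "nsimp k m \<sigma> \<Longrightarrow> k < i \<Longrightarrow> \<sigma> i = (0, 0)"
  unfolding nsimp_def by auto

lemma nsimp_eqI: "nsimp k m \<sigma> \<Longrightarrow> nsimp k m' \<tau> \<Longrightarrow> (\<And>i. i \<le> k \<Longrightarrow> \<sigma> i = \<tau> i) \<Longrightarrow> \<sigma> = \<tau>"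
  by (rule ext) (metis nsimp_beyond not_le)

definition chain_enum :: "(nat \<times> nat) set \<Rightarrow> nat \<Rightarrow> nat \<times> nat" where
  "chain_enum C i = (if i < card C then enumerate C i else (0, 0))"

definition chain_coords :: "(nat \<times> nat) set \<Rightarrow> nat \<Rightarrow> (nat \<Rightarrow> nat \<times> nat) \<Rightarrow> nat \<Rightarrow> nat" where
  "chain_coords C k \<sigma> i = (if i \<le> k then index_in C (\<sigma> i) else 0)"

text \<open>A chain C of n + 1 pairs spans the n-simplex chain_enum C of the nerve, and
  chain_coords C identifies the simplices with vertices in C with those of Delta^n.\<close>

locale finite_chain =
  fixes C :: "(nat \<times> nat) set" and m :: nat
  assumes fin: "finite C" and ne: "C \<noteq> {}" and C_pairs: "C \<subseteq> pairs m" and chain: "is_chain C"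
begin

abbreviation "n \<equiv> card C - 1"

lemma card_chain: "card C = Suc n"
  using fin ne by (simp add: card_gt_0_iff)

lemma chain_enum_in: "i \<le> n \<Longrightarrow> chain_enum C i \<in> C"
  unfolding chain_enum_def using finite_enumerate_in_set[OF fin] card_chain by simp

lemma index_chain_le: "x \<in> C \<Longrightarrow> index_in C x \<le> n"
  using index_in_less_card[OF fin] card_chain by fastforce

lemma index_chain_enum: "i \<le> n \<Longrightarrow> index_in C (chain_enum C i) = i"
  unfolding chain_enum_def using index_in_enumerate[OF fin] card_chain by simp

lemma chain_enum_index: "x \<in> C \<Longrightarrow> chain_enum C (index_in C x) = x"
  unfolding chain_enum_def using enumerate_index_in[OF fin] index_in_less_card[OF fin] by simp

lemma nsimp_chain_enum: "nsimp n m (chain_enum C)"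
  unfolding nsimp_def
proof (intro conjI allI impI)
  fix i assume "i \<le> n"
  then have "chain_enum C i \<in> pairs m" using chain_enum_in C_pairs by blast
  then show "fst (chain_enum C i) \<le> snd (chain_enum C i)" "snd (chain_enum C i) \<le> m"
    unfolding pairs_def by auto
next
  fix i j assume ij: "i \<le> j \<and> j \<le> n"
  then have "enumerate C i \<le> enumerate C j"
    using finite_enumerate_le_iff[OF fin] card_chain by simp
  then have "pair_le (chain_enum C i) (chain_enum C j)"
    using chain_less_eq_imp_pair_le[OF chain] chain_enum_in ij card_chain
    unfolding chain_enum_def by auto
  then show "fst (chain_enum C i) \<le> fst (chain_enum C j)" "snd (chain_enum C i) \<le> snd (chain_enum C j)"
    unfolding pair_le_def by auto
next
  fix i assume "n < i" then show "chain_enum C i = (0, 0)"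
    using card_chain by (simp add: chain_enum_def)
qed

lemma mor_chain_coords: "nsimp k m' \<sigma> \<Longrightarrow> verts k \<sigma> \<subseteq> C \<Longrightarrow> mor k n (chain_coords C k \<sigma>)"
  unfolding mor_def chain_coords_def verts_def
  using index_chain_le index_in_mono[OF fin] nsimp_pair_le pair_le_imp_less_eq
  by (auto simp: image_subset_iff)

lemma pre_chain_coords: "nsimp k m' \<sigma> \<Longrightarrow> verts k \<sigma> \<subseteq> C \<Longrightarrow> pre k (chain_coords C k \<sigma>) (chain_enum C) = \<sigma>"
  by (rule ext) (auto simp: pre_def chain_coords_def chain_enum_index verts_def nsimp_beyond image_subset_iff)

lemma chain_coords_pre: "mor l k \<beta> \<Longrightarrow> chain_coords C l (pre l \<beta> \<sigma>) = cmp l (chain_coords C k \<sigma>) \<beta>"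
  by (rule ext) (auto simp: pre_def chain_coords_def cmp_def mor_def)

end

definition down_closed :: "'a set set \<Rightarrow> bool" where
  "down_closed F \<longleftrightarrow> (\<forall>D\<in>F. \<forall>D'. D' \<subseteq> D \<longrightarrow> D' \<in> F)"

definition nerve_lift ::
    "'e sset \<Rightarrow> (nat \<Rightarrow> 'e \<Rightarrow> 'b) \<Rightarrow> (nat \<Rightarrow> (nat \<Rightarrow> nat \<times> nat) \<Rightarrow> 'b) \<Rightarrow> nat \<Rightarrow>
      (nat \<times> nat) set set \<Rightarrow> (nat \<Rightarrow> (nat \<Rightarrow> nat \<times> nat) \<Rightarrow> 'e) \<Rightarrow> bool" where
  "nerve_lift E p g m F f \<longleftrightarrow> nerve_map_on E (nerve_simplices m F) f \<and>
     (\<forall>k \<sigma>. (k, \<sigma>) \<in> nerve_simplices m F \<longrightarrow> p k (f k \<sigma>) = g k \<sigma>)"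

lemma nerve_map_on_pre_sset_map:
  assumes f: "nerve_map_on E S f"
    and A_sm: "sm A = (\<lambda>j k \<beta> \<alpha>. cmp j \<alpha> \<beta>)"
    and A_sc: "\<And>l \<gamma>. \<gamma> \<in> sc A l \<Longrightarrow> mor l n \<gamma> \<and> (l, pre l \<gamma> \<tau>) \<in> S"
  shows "sset_map A E (\<lambda>l \<gamma>. f l (pre l \<gamma> \<tau>))"
  unfolding sset_map_def
proof (intro conjI allI impI)
  fix l \<gamma> assume "\<gamma> \<in> sc A l"
  then show "f l (pre l \<gamma> \<tau>) \<in> sc E l" using f A_sc unfolding nerve_map_on_def by blast
next
  fix l l' \<beta> \<gamma> assume a: "mor l l' \<beta> \<and> \<gamma> \<in> sc A l'"
  then have "f l (pre l (sm A l l' \<beta> \<gamma>) \<tau>) = f l (pre l \<beta> (pre l' \<gamma> \<tau>))"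
    using pre_pre[of l' n \<gamma> l \<beta>] A_sc[of \<gamma> l'] A_sm by simp
  also have "\<dots> = sm E l l' \<beta> (f l' (pre l' \<gamma> \<tau>))"
    using f A_sc a unfolding nerve_map_on_def by blast
  finally show "f l (pre l (sm A l l' \<beta> \<gamma>) \<tau>) = sm E l l' \<beta> (f l' (pre l' \<gamma> \<tau>))" .
qed

section \<open>Filling one inner horn of the nerve\<close>

context finite_chain
begin

lemma horn_verts_in_family:
  assumes down: "down_closed F"
    and faces: "\<And>x. x \<in> C \<Longrightarrow> x \<noteq> z \<Longrightarrow> C - {x} \<in> F"
    and \<gamma>: "\<gamma> \<in> sc (horn n (index_in C z)) l"
  shows "verts l (pre l \<gamma> (chain_enum C)) \<in> F"
proof -
  from \<gamma> obtain i where i: "mor l n \<gamma>" "i \<le> n" "i \<noteq> index_in C z" "i \<notin> \<gamma> ` {0..l}"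
    unfolding horn_def by auto
  have "chain_enum C i \<noteq> z" using index_chain_enum[OF i(2)] i(3) by auto
  then have face: "C - {chain_enum C i} \<in> F" using faces chain_enum_in[OF i(2)] by blast
  have "verts l (pre l \<gamma> (chain_enum C)) \<subseteq> C - {chain_enum C i}"
  proof
    fix y assume "y \<in> verts l (pre l \<gamma> (chain_enum C))"
    then obtain i' where i': "i' \<le> l" "y = chain_enum C (\<gamma> i')" unfolding verts_def pre_def by auto
    have \<gamma>i': "\<gamma> i' \<le> n" "\<gamma> i' \<noteq> i" using mor_le[OF i(1) i'(1)] i(4) i'(1) by auto
    have "index_in C y \<noteq> index_in C (chain_enum C i)"
      using index_chain_enum[OF \<gamma>i'(1)] index_chain_enum[OF i(2)] \<gamma>i'(2) i'(2) by simp
    then show "y \<in> C - {chain_enum C i}" using chain_enum_in[OF \<gamma>i'(1)] i'(2) by auto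
  qed
  then show ?thesis using down face unfolding down_closed_def by blast
qed

lemma chain_coords_in_horn:
  assumes z: "z \<in> C"
    and down: "down_closed F"
    and missing: "C - {z} \<notin> F"
    and \<sigma>: "nsimp k m \<sigma>" "verts k \<sigma> \<subseteq> C" "verts k \<sigma> \<in> F"
  shows "chain_coords C k \<sigma> \<in> sc (horn n (index_in C z)) k"
proof -
  have "\<exists>i\<le>n. i \<noteq> index_in C z \<and> i \<notin> chain_coords C k \<sigma> ` {0..k}"
  proof (rule ccontr)
    assume "\<not> ?thesis"
    then have all: "\<And>i. i \<le> n \<Longrightarrow> i \<noteq> index_in C z \<Longrightarrow> i \<in> chain_coords C k \<sigma> ` {0..k}" by blast
    have "C - {z} \<subseteq> verts k \<sigma>"
    proof
      fix x assume x: "x \<in> C - {z}"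
      then have "index_in C x \<noteq> index_in C z" using index_in_inj[OF fin] z by blast
      then have "index_in C x \<in> chain_coords C k \<sigma> ` {0..k}"
        using all[OF index_chain_le] x by blast
      then obtain i where i: "i \<le> k" "index_in C x = index_in C (\<sigma> i)"
        unfolding chain_coords_def by auto
      moreover have "\<sigma> i \<in> C" using \<sigma>(2) i(1) unfolding verts_def by auto
      ultimately have "x = \<sigma> i" using index_in_inj[OF fin] x by blast
      then show "x \<in> verts k \<sigma>" using i(1) unfolding verts_def by auto
    qed
    then show False using down \<sigma>(3) missing unfolding down_closed_def by blast
  qed
  then show ?thesis using mor_chain_coords[OF \<sigma>(1,2)] unfolding horn_def by simp
qed

lemma nerve_map_on_glue:
  assumes down: "down_closed F"
    and f: "nerve_map_on E (nerve_simplices m F) f"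
    and w: "sset_map (simplex n) E w"
    and agree: "\<And>k \<sigma>. nsimp k m \<sigma> \<Longrightarrow> verts k \<sigma> \<subseteq> C \<Longrightarrow> verts k \<sigma> \<in> F \<Longrightarrow>
      w k (chain_coords C k \<sigma>) = f k \<sigma>"
  shows "nerve_map_on E (nerve_simplices m (F \<union> Pow C))
    (\<lambda>k \<sigma>. if verts k \<sigma> \<in> F then f k \<sigma> else w k (chain_coords C k \<sigma>))" (is "nerve_map_on _ _ ?f")
  unfolding nerve_map_on_def
proof (intro conjI allI impI)
  have w_sc: "mor l n \<gamma> \<Longrightarrow> w l \<gamma> \<in> sc E l" for l \<gamma>
    using w unfolding sset_map_def simplex_def by simp
  fix k \<sigma> assume "(k, \<sigma>) \<in> nerve_simplices m (F \<union> Pow C)"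
  then have \<sigma>: "nsimp k m \<sigma>" "verts k \<sigma> \<in> F \<union> Pow C" unfolding nerve_simplices_def by auto
  show "?f k \<sigma> \<in> sc E k"
  proof (cases "verts k \<sigma> \<in> F")
    case True
    then show ?thesis using f \<sigma>(1) unfolding nerve_map_on_def nerve_simplices_def by simp
  next
    case False
    then show ?thesis using \<sigma> w_sc[OF mor_chain_coords[OF \<sigma>(1)]] by simp
  qed
next
  fix k l \<beta> \<sigma> assume a: "mor l k \<beta> \<and> (k, \<sigma>) \<in> nerve_simplices m (F \<union> Pow C)"
  then have \<beta>: "mor l k \<beta>" and \<sigma>: "nsimp k m \<sigma>" and \<sigma>_in: "verts k \<sigma> \<in> F \<union> Pow C"
    unfolding nerve_simplices_def by auto
  have sub: "verts l (pre l \<beta> \<sigma>) \<subseteq> verts k \<sigma>" using verts_pre[OF \<beta>] .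
  show "?f l (pre l \<beta> \<sigma>) = sm E l k \<beta> (?f k \<sigma>)"
  proof (cases "verts k \<sigma> \<in> F")
    case True
    then show ?thesis using down True sub f \<beta> \<sigma> unfolding nerve_map_on_def nerve_simplices_def down_closed_def by auto
  next
    case False
    then have \<sigma>_C: "verts k \<sigma> \<subseteq> C" using \<sigma>_in by auto
    have "sm E l k \<beta> (?f k \<sigma>) = w l (cmp l (chain_coords C k \<sigma>) \<beta>)"
      using False w \<beta> mor_chain_coords[OF \<sigma> \<sigma>_C] unfolding sset_map_def simplex_def by simp
    also have "\<dots> = w l (chain_coords C l (pre l \<beta> \<sigma>))" using chain_coords_pre[OF \<beta>] by simp
    also have "\<dots> = ?f l (pre l \<beta> \<sigma>)"
      using agree[OF nsimp_pre[OF \<sigma> \<beta>]] sub \<sigma>_C by auto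
    finally show ?thesis by simp
  qed
qed

lemma horn_lifting_problem:
  assumes down: "down_closed F"
    and faces: "\<And>x. x \<in> C \<Longrightarrow> x \<noteq> z \<Longrightarrow> C - {x} \<in> F"
    and lift: "nerve_lift E p g m F f"
    and g: "nerve_map_on B (nerve_simplices m UNIV) g"
  shows "sset_map (horn n (index_in C z)) E (\<lambda>l \<gamma>. f l (pre l \<gamma> (chain_enum C)))"
    and "sset_map (simplex n) B (\<lambda>l \<gamma>. g l (pre l \<gamma> (chain_enum C)))"
    and "\<forall>l \<gamma>. \<gamma> \<in> sc (horn n (index_in C z)) l \<longrightarrow>
      p l (f l (pre l \<gamma> (chain_enum C))) = g l (pre l \<gamma> (chain_enum C))"
proof -
  have horn_in: "mor l n \<gamma> \<and> (l, pre l \<gamma> (chain_enum C)) \<in> nerve_simplices m F"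
    if "\<gamma> \<in> sc (horn n (index_in C z)) l" for l \<gamma>
  proof -
    have "mor l n \<gamma>" using that by (simp add: horn_def)
    then show ?thesis
      using horn_verts_in_family[OF down faces that] nsimp_pre[OF nsimp_chain_enum]
      unfolding nerve_simplices_def by simp
  qed
  have f: "nerve_map_on E (nerve_simplices m F) f"
    using lift unfolding nerve_lift_def by blast
  show "sset_map (horn n (index_in C z)) E (\<lambda>l \<gamma>. f l (pre l \<gamma> (chain_enum C)))"
    by (rule nerve_map_on_pre_sset_map[OF f _ horn_in]) (simp add: horn_def)
  show "sset_map (simplex n) B (\<lambda>l \<gamma>. g l (pre l \<gamma> (chain_enum C)))"
    by (rule nerve_map_on_pre_sset_map[OF g])
      (auto simp: simplex_def nerve_simplices_def intro: nsimp_pre[OF nsimp_chain_enum])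
  show "\<forall>l \<gamma>. \<gamma> \<in> sc (horn n (index_in C z)) l \<longrightarrow>
      p l (f l (pre l \<gamma> (chain_enum C))) = g l (pre l \<gamma> (chain_enum C))"
    using lift horn_in unfolding nerve_lift_def by blast
qed

text \<open>Through chain_coords, the simplices of the simplex spanned by C that lie in F are
  exactly those of the inner horn at the position of z.\<close>

lemma lift_chain_simplex:
  assumes fib: "inner_fibration E B p"
    and down: "down_closed F"
    and z: "z \<in> C" "a \<in> C" "a < z" "b \<in> C" "z < b"
    and faces: "\<And>x. x \<in> C \<Longrightarrow> x \<noteq> z \<Longrightarrow> C - {x} \<in> F"
    and missing: "C - {z} \<notin> F"
    and lift: "nerve_lift E p g m F f"
    and g: "nerve_map_on B (nerve_simplices m UNIV) g"
  shows "\<exists>w. sset_map (simplex n) E w \<and>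
    (\<forall>k \<sigma>. nsimp k m \<sigma> \<and> verts k \<sigma> \<subseteq> C \<and> verts k \<sigma> \<in> F \<longrightarrow> w k (chain_coords C k \<sigma>) = f k \<sigma>) \<and>
    (\<forall>l \<gamma>. mor l n \<gamma> \<longrightarrow> p l (w l \<gamma>) = g l (pre l \<gamma> (chain_enum C)))"
proof -
  have "0 < index_in C z" "index_in C z < n"
    using index_in_strict_mono[OF fin z(2,3)] index_in_strict_mono[OF fin z(1,5)] index_chain_le[OF z(4)]
    by linarith+
  then have "llp (horn n (index_in C z)) (simplex n) (\<lambda>j \<alpha>. \<alpha>) E B p"
    using fib unfolding inner_fibration_def by blast
  then obtain w where w: "sset_map (simplex n) E w"
    "\<And>l \<gamma>. \<gamma> \<in> sc (horn n (index_in C z)) l \<Longrightarrow> w l \<gamma> = f l (pre l \<gamma> (chain_enum C))"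
    "\<And>l \<gamma>. \<gamma> \<in> sc (simplex n) l \<Longrightarrow> p l (w l \<gamma>) = g l (pre l \<gamma> (chain_enum C))"
    using horn_lifting_problem[OF down faces lift g] unfolding llp_def by blast
  have "w k (chain_coords C k \<sigma>) = f k \<sigma>"
    if "nsimp k m \<sigma>" "verts k \<sigma> \<subseteq> C" "verts k \<sigma> \<in> F" for k \<sigma>
    using w(2)[OF chain_coords_in_horn[OF z(1) down missing that]] pre_chain_coords[OF that(1,2)]
    by simp
  moreover have "p l (w l \<gamma>) = g l (pre l \<gamma> (chain_enum C))" if "mor l n \<gamma>" for l \<gamma>
    using w(3) that unfolding simplex_def by simp
  ultimately show ?thesis using w(1) by blast
qed

lemma extend_over_inner_horn:
  assumes fib: "inner_fibration E B p"
    and down: "down_closed F"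
    and z: "z \<in> C" "a \<in> C" "a < z" "b \<in> C" "z < b"
    and faces: "\<And>x. x \<in> C \<Longrightarrow> x \<noteq> z \<Longrightarrow> C - {x} \<in> F"
    and missing: "C - {z} \<notin> F"
    and lift: "nerve_lift E p g m F f"
    and g: "nerve_map_on B (nerve_simplices m UNIV) g"
  shows "\<exists>f'. nerve_lift E p g m (F \<union> Pow C) f' \<and>
    (\<forall>k \<sigma>. (k, \<sigma>) \<in> nerve_simplices m F \<longrightarrow> f' k \<sigma> = f k \<sigma>)"
proof -
  obtain w where w: "sset_map (simplex n) E w"
    "\<And>k \<sigma>. nsimp k m \<sigma> \<Longrightarrow> verts k \<sigma> \<subseteq> C \<Longrightarrow> verts k \<sigma> \<in> F \<Longrightarrow> w k (chain_coords C k \<sigma>) = f k \<sigma>"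
    "\<And>l \<gamma>. mor l n \<gamma> \<Longrightarrow> p l (w l \<gamma>) = g l (pre l \<gamma> (chain_enum C))"
    using lift_chain_simplex[OF fib down z faces missing lift g] by blast
  define f' where "f' k \<sigma> = (if verts k \<sigma> \<in> F then f k \<sigma> else w k (chain_coords C k \<sigma>))" for k \<sigma>
  have "nerve_map_on E (nerve_simplices m (F \<union> Pow C)) f'"
    unfolding f'_def using down lift w(1,2) by (intro nerve_map_on_glue) (auto simp: nerve_lift_def)
  moreover have "p k (f' k \<sigma>) = g k \<sigma>" if "(k, \<sigma>) \<in> nerve_simplices m (F \<union> Pow C)" for k \<sigma>
  proof (cases "verts k \<sigma> \<in> F")
    case True
    then show ?thesis using that lift unfolding f'_def nerve_simplices_def nerve_lift_def by simp
  next
    case False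
    then have \<sigma>: "nsimp k m \<sigma>" "verts k \<sigma> \<subseteq> C" using that unfolding nerve_simplices_def by auto
    then show ?thesis
      using False w(3)[OF mor_chain_coords[OF \<sigma>]] pre_chain_coords[OF \<sigma>] unfolding f'_def by simp
  qed
  ultimately have "nerve_lift E p g m (F \<union> Pow C) f'"
    unfolding nerve_lift_def by blast
  moreover have "f' k \<sigma> = f k \<sigma>" if "(k, \<sigma>) \<in> nerve_simplices m F" for k \<sigma>
    using that unfolding f'_def nerve_simplices_def by simp
  ultimately show ?thesis by blast
qed

end

section \<open>A filtration of the nerve of pairs by inner horns\<close>

text \<open>base_chains m is the image of ESd(Delta^m) (chains whose first coordinates all lie
  below their second coordinates) together with the nerve of Fun([1], boundary of Delta^m)
  (chains whose coordinates miss a vertex). A chain D outside it is completed by its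
  pivot (b, c): b is the least second coordinate of D and c the least second coordinate
  of the pairs of D whose first coordinate exceeds b. The chains containing their pivot
  are attached in the order of fill_rank, each by filling the inner horn at its pivot.\<close>

definition covers :: "nat \<Rightarrow> (nat \<times> nat) set \<Rightarrow> bool" where
  "covers m D \<longleftrightarrow> (\<forall>v\<le>m. \<exists>y\<in>D. fst y = v \<or> snd y = v)"

definition esd_chain :: "(nat \<times> nat) set \<Rightarrow> bool" where
  "esd_chain D \<longleftrightarrow> (\<forall>x\<in>D. \<forall>y\<in>D. fst x \<le> snd y)"

definition base_chains :: "nat \<Rightarrow> (nat \<times> nat) set set" where
  "base_chains m = {D. \<not> covers m D \<or> esd_chain D}"

definition nonbase :: "nat \<Rightarrow> (nat \<times> nat) set \<Rightarrow> bool" where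
  "nonbase m D \<longleftrightarrow> finite D \<and> D \<subseteq> pairs m \<and> is_chain D \<and> covers m D \<and> \<not> esd_chain D"

definition low_snd :: "(nat \<times> nat) set \<Rightarrow> nat" where
  "low_snd D = Min (snd ` D)"

definition pivot_snd :: "(nat \<times> nat) set \<Rightarrow> nat" where
  "pivot_snd D = Min (snd ` {y\<in>D. low_snd D < fst y})"

definition pivot :: "(nat \<times> nat) set \<Rightarrow> nat \<times> nat" where
  "pivot D = (low_snd D, pivot_snd D)"

definition pivot_chains :: "nat \<Rightarrow> (nat \<times> nat) set set" where
  "pivot_chains m = {C. nonbase m C \<and> pivot C \<in> C}"

definition low_count :: "(nat \<times> nat) set \<Rightarrow> nat" where
  "low_count D = card {y\<in>D. fst y \<le> low_snd D}"

definition fill_rank :: "nat \<Rightarrow> (nat \<times> nat) set \<Rightarrow> nat \<times> nat \<times> nat" where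
  "fill_rank m D = (card D, m - low_snd D, card D - low_count D)"

lemma base_chains_subset: "D \<in> base_chains m \<Longrightarrow> D' \<subseteq> D \<Longrightarrow> D' \<in> base_chains m"
  unfolding base_chains_def covers_def esd_chain_def by blast

lemma low_snd_eqI: "finite D \<Longrightarrow> y \<in> D \<Longrightarrow> snd y = b \<Longrightarrow> (\<And>y. y \<in> D \<Longrightarrow> b \<le> snd y) \<Longrightarrow> low_snd D = b"
  unfolding low_snd_def by (rule Min_eqI) auto

lemma low_snd_props: "finite D \<Longrightarrow> D \<noteq> {} \<Longrightarrow> (\<exists>y\<in>D. snd y = low_snd D) \<and> (\<forall>y\<in>D. low_snd D \<le> snd y)"
proof -
  assume a: "finite D" "D \<noteq> {}"
  then have "Min (snd ` D) \<in> snd ` D" by (intro Min_in) auto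
  moreover have "\<forall>y\<in>D. Min (snd ` D) \<le> snd y" using a by auto
  ultimately show ?thesis unfolding low_snd_def by force
qed

lemma pivot_snd_eqI: "finite D \<Longrightarrow> y \<in> D \<Longrightarrow> low_snd D < fst y \<Longrightarrow> snd y = c \<Longrightarrow>
   (\<And>y. y \<in> D \<Longrightarrow> low_snd D < fst y \<Longrightarrow> c \<le> snd y) \<Longrightarrow> pivot_snd D = c"
  unfolding pivot_snd_def by (rule Min_eqI) auto

lemma pivot_snd_props: "finite D \<Longrightarrow> y0 \<in> D \<Longrightarrow> low_snd D < fst y0 \<Longrightarrow>
   (\<exists>y\<in>D. low_snd D < fst y \<and> snd y = pivot_snd D) \<and> (\<forall>y\<in>D. low_snd D < fst y \<longrightarrow> pivot_snd D \<le> snd y)"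
proof -
  assume a: "finite D" "y0 \<in> D" "low_snd D < fst y0"
  let ?A = "snd ` {y\<in>D. low_snd D < fst y}"
  have "finite ?A" using a by auto
  have "?A \<noteq> {}" using a(2,3) by blast
  then have "Min ?A \<in> ?A" using \<open>finite ?A\<close> by (intro Min_in)
  moreover have "\<forall>y\<in>D. low_snd D < fst y \<longrightarrow> Min ?A \<le> snd y" using \<open>finite ?A\<close> by auto
  ultimately show ?thesis unfolding pivot_snd_def by force
qed

locale nonbase_chain =
  fixes m :: nat and D :: "(nat \<times> nat) set"
  assumes nonbase: "nonbase m D"
begin

lemma D_finite: "finite D" and D_pairs: "D \<subseteq> pairs m" and D_chain: "is_chain D"
  and D_covers: "covers m D" and D_not_esd: "\<not> esd_chain D"
  using nonbase unfolding nonbase_def by auto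

lemma D_nonempty: "D \<noteq> {}"
  using D_covers unfolding covers_def by auto

lemma low_snd_in: "\<exists>y\<in>D. snd y = low_snd D" and low_snd_le: "y \<in> D \<Longrightarrow> low_snd D \<le> snd y"
  using low_snd_props[OF D_finite D_nonempty] by auto

lemma pairs_bounds: "y \<in> D \<Longrightarrow> fst y \<le> snd y \<and> snd y \<le> m"
  using D_pairs unfolding pairs_def by auto

lemma low_snd_less_some_fst: "\<exists>y\<in>D. low_snd D < fst y"
proof -
  obtain x y where "x \<in> D" "y \<in> D" "snd y < fst x" using D_not_esd unfolding esd_chain_def by force
  then show ?thesis using low_snd_le[of y] by force
qed

lemma pivot_snd_in: "\<exists>y\<in>D. low_snd D < fst y \<and> snd y = pivot_snd D"
  and pivot_snd_le: "y \<in> D \<Longrightarrow> low_snd D < fst y \<Longrightarrow> pivot_snd D \<le> snd y"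
  using low_snd_less_some_fst pivot_snd_props[OF D_finite] by blast+

lemma low_snd_less_pivot_snd: "low_snd D < pivot_snd D"
  using pivot_snd_in pairs_bounds by fastforce

lemma pivot_snd_le_dim: "pivot_snd D \<le> m"
  using pivot_snd_in pairs_bounds by fastforce

lemma pivot_in_pairs: "pivot D \<in> pairs m"
  using low_snd_less_pivot_snd pivot_snd_le_dim unfolding pivot_def pairs_def by simp

lemma low_pair_le_pivot: assumes "y \<in> D" "fst y \<le> low_snd D" shows "pair_le y (pivot D)"
proof -
  obtain y0 where y0: "y0 \<in> D" "low_snd D < fst y0" "snd y0 = pivot_snd D" using pivot_snd_in by blast
  have "pair_le y y0 \<or> pair_le y0 y" using D_chain assms(1) y0(1) unfolding is_chain_def by blast
  then have "pair_le y y0" using assms(2) y0(2) unfolding pair_le_def by auto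
  then show ?thesis using assms(2) y0(3) unfolding pair_le_def pivot_def by simp
qed

lemma pivot_pair_le_high: assumes "y \<in> D" "low_snd D < fst y" shows "pair_le (pivot D) y" "pivot D \<noteq> y"
  using assms pivot_snd_le unfolding pair_le_def pivot_def by auto

lemma chain_insert_pivot: "is_chain (insert (pivot D) D)"
  unfolding is_chain_def
proof (intro ballI)
  fix x y assume x: "x \<in> insert (pivot D) D" and y: "y \<in> insert (pivot D) D"
  have h: "\<And>y. y \<in> D \<Longrightarrow> pair_le y (pivot D) \<or> pair_le (pivot D) y"
    using low_pair_le_pivot pivot_pair_le_high by (meson not_le)
  show "pair_le x y \<or> pair_le y x"
  proof (cases "x = pivot D")
    case True
    then show ?thesis
    proof (cases "y = pivot D")
      case True then show ?thesis using \<open>x = pivot D\<close> pair_le_refl by simp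
    next
      case False then have "y \<in> D" using y by simp
      then show ?thesis using h[of y] \<open>x = pivot D\<close> by blast
    qed
  next
    case False then have xD: "x \<in> D" using x by simp
    show ?thesis
    proof (cases "y = pivot D")
      case True then show ?thesis using h[OF xD] by blast
    next
      case False then have "y \<in> D" using y by simp
      then show ?thesis using D_chain xD unfolding is_chain_def by blast
    qed
  qed
qed

lemma insert_pivot:
  assumes "pivot D \<notin> D"
  shows "nonbase m (insert (pivot D) D)" "low_snd (insert (pivot D) D) = low_snd D" "pivot (insert (pivot D) D) = pivot D"
proof -
  let ?C = "insert (pivot D) D"
  have finC: "finite ?C" using D_finite by simp
  show bC: "low_snd ?C = low_snd D"
  proof -
    obtain y where y: "y \<in> D" "snd y = low_snd D" using low_snd_in by blast
    show ?thesis
      by (rule low_snd_eqI[OF finC, of y]) (use y low_snd_le low_snd_less_pivot_snd in \<open>auto simp: pivot_def\<close>)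
  qed
  show "nonbase m ?C"
    unfolding nonbase_def using D_finite D_pairs pivot_in_pairs chain_insert_pivot D_covers D_not_esd
    unfolding covers_def esd_chain_def by blast
  show "pivot ?C = pivot D"
  proof -
    obtain y0 where y0: "y0 \<in> D" "low_snd D < fst y0" "snd y0 = pivot_snd D" using pivot_snd_in by blast
    have "pivot_snd ?C = pivot_snd D"
      by (rule pivot_snd_eqI[OF finC, of y0]) (use y0 bC pivot_snd_le in \<open>auto simp: pivot_def\<close>)
    then show ?thesis using bC unfolding pivot_def by simp
  qed
qed

end

lemma pivot_chains_nonbase: "C \<in> pivot_chains m \<Longrightarrow> nonbase_chain m C"
  unfolding pivot_chains_def nonbase_chain_def by simp

lemma remove_pivot:
  assumes C: "C \<in> pivot_chains m"
  shows "nonbase m (C - {pivot C})" "pivot (C - {pivot C}) = pivot C" "low_snd (C - {pivot C}) = low_snd C"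
proof -
  interpret nonbase_chain m C using pivot_chains_nonbase[OF C] .
  let ?z = "pivot C" and ?D = "C - {pivot C}"
  have finD: "finite ?D" using D_finite by simp
  obtain yb where yb: "yb \<in> C" "snd yb = low_snd C" using low_snd_in by blast
  have ybz: "yb \<noteq> ?z" using yb low_snd_less_pivot_snd unfolding pivot_def by auto
  obtain y0 where y0: "y0 \<in> C" "low_snd C < fst y0" "snd y0 = pivot_snd C" using pivot_snd_in by blast
  have y0z: "y0 \<noteq> ?z" using y0 unfolding pivot_def by auto
  show bD: "low_snd ?D = low_snd C"
    by (rule low_snd_eqI[OF finD, of yb]) (use yb ybz low_snd_le in auto)
  have "pivot_snd ?D = pivot_snd C"
    by (rule pivot_snd_eqI[OF finD, of y0]) (use y0 y0z bD pivot_snd_le in auto)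
  then show "pivot ?D = pivot C" using bD unfolding pivot_def by simp
  have cvD: "covers m ?D"
    unfolding covers_def
  proof (intro allI impI)
    fix v assume "v \<le> m"
    then obtain y where y: "y \<in> C" "fst y = v \<or> snd y = v" using D_covers unfolding covers_def by blast
    show "\<exists>y\<in>?D. fst y = v \<or> snd y = v"
    proof (cases "y = ?z")
      case False then show ?thesis using y by blast
    next
      case True
      then have "v = low_snd C \<or> v = pivot_snd C" using y unfolding pivot_def by auto
      then show ?thesis using yb ybz y0 y0z by blast
    qed
  qed
  have "\<not> esd_chain ?D" unfolding esd_chain_def using yb ybz y0 y0z by force
  then show "nonbase m ?D" unfolding nonbase_def using D_finite D_pairs D_chain cvD unfolding is_chain_def by blast
qed

lemma pivot_inner:
  assumes C: "C \<in> pivot_chains m"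
  shows "\<exists>a\<in>C. a < pivot C" "\<exists>b\<in>C. pivot C < b"
proof -
  interpret nonbase_chain m C using pivot_chains_nonbase[OF C] .
  obtain yb where yb: "yb \<in> C" "snd yb = low_snd C" using low_snd_in by blast
  have "pair_le yb (pivot C)" using low_pair_le_pivot[OF yb(1)] yb pairs_bounds[OF yb(1)] by simp
  moreover have "yb \<noteq> pivot C" using yb low_snd_less_pivot_snd unfolding pivot_def by auto
  ultimately have "yb < pivot C" using pair_le_imp_less_eq by (simp add: order.strict_iff_order)
  then show "\<exists>a\<in>C. a < pivot C" using yb by blast
  obtain y0 where y0: "y0 \<in> C" "low_snd C < fst y0" using low_snd_less_some_fst by blast
  have "pivot C < y0" using pivot_pair_le_high[OF y0] pair_le_imp_less_eq by (simp add: order.strict_iff_order)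
  then show "\<exists>b\<in>C. pivot C < b" using y0 by blast
qed

text \<open>Trading x for the pivot of C - {x} either increases low_snd or keeps it and adds a
  pair below it to the chain.\<close>

lemma fill_rank_insert_pivot_face:
  assumes C: "C \<in> pivot_chains m" and x: "x \<in> C" "x \<noteq> pivot C"
    and not_base: "C - {x} \<notin> base_chains m" and no_pivot: "pivot (C - {x}) \<notin> C - {x}"
  shows "nonbase m (C - {x}) \<and> fill_rank m (insert (pivot (C - {x})) (C - {x})) < fill_rank m C"
proof -
  interpret nonbase_chain m C using pivot_chains_nonbase[OF C] .
  let ?D = "C - {x}"
  have MD: "nonbase m ?D" using not_base D_finite D_pairs D_chain unfolding nonbase_def base_chains_def is_chain_def by auto
  interpret Dm: nonbase_chain m ?D using MD by (simp add: nonbase_chain_def)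
  let ?C' = "insert (pivot ?D) ?D"
  have cardD: "card ?D = card C - 1" using D_finite x by simp
  have cC: "card C > 0" using D_finite x by (auto simp: card_gt_0_iff)
  have cardC': "card ?C' = card C" using no_pivot cardD cC Dm.D_finite by simp
  have bC': "low_snd ?C' = low_snd ?D" using Dm.insert_pivot(2)[OF no_pivot] .
  have bCD: "low_snd C \<le> low_snd ?D" using Dm.low_snd_in low_snd_le by force
  have bDm: "low_snd ?D \<le> m" using Dm.low_snd_in Dm.pairs_bounds by fastforce
  show ?thesis
  proof (cases "low_snd C < low_snd ?D")
    case True
    then show ?thesis using MD cardC' bC' bDm unfolding fill_rank_def by auto
  next
    case False
    then have be: "low_snd ?D = low_snd C" using bCD by simp
    have fx: "low_snd C < fst x"
    proof (rule ccontr)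
      assume "\<not> low_snd C < fst x"
      then have "{y\<in>?D. low_snd ?D < fst y} = {y\<in>C. low_snd C < fst y}" using be by auto
      then have "pivot_snd ?D = pivot_snd C" unfolding pivot_snd_def using be by simp
      then have "pivot ?D = pivot C" unfolding pivot_def using be by simp
      then show False using no_pivot x pivot_chains_def C by auto
    qed
    have "{y\<in>?C'. fst y \<le> low_snd ?C'} = insert (pivot ?D) {y\<in>C. fst y \<le> low_snd C}"
      using bC' be fx unfolding pivot_def by auto
    moreover have "pivot ?D \<notin> {y\<in>C. fst y \<le> low_snd C}"
    proof
      assume "pivot ?D \<in> {y\<in>C. fst y \<le> low_snd C}"
      then have "pivot ?D \<in> C" by simp
      moreover have "pivot ?D \<noteq> x"
      proof
        assume "pivot ?D = x"
        then have "fst x = low_snd C" using be unfolding pivot_def by (metis fst_conv)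
        then show False using fx by simp
      qed
      ultimately show False using no_pivot by simp
    qed
    ultimately have "low_count ?C' = Suc (low_count C)" unfolding low_count_def using D_finite by simp
    moreover have "low_count ?C' \<le> card ?C'" unfolding low_count_def using Dm.D_finite by (intro card_mono) auto
    ultimately show ?thesis using MD cardC' bC' be unfolding fill_rank_def by auto
  qed
qed

lemma nonbase_face: "C \<in> pivot_chains m \<Longrightarrow> C - {x} \<notin> base_chains m \<Longrightarrow> nonbase m (C - {x})"
  unfolding pivot_chains_def nonbase_def base_chains_def is_chain_def by auto

lemma finite_pairs: "finite (pairs m)"
proof -
  have "pairs m \<subseteq> {0..m} \<times> {0..m}" unfolding pairs_def by auto
  then show ?thesis by (rule finite_subset) simp
qed

lemma finite_pivot_chains: "finite (pivot_chains m)"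
proof -
  have "pivot_chains m \<subseteq> Pow (pairs m)" unfolding pivot_chains_def nonbase_def by auto
  then show ?thesis using finite_pairs by (simp add: finite_subset)
qed

lemma nonbase_not_base: "nonbase m D \<Longrightarrow> D \<notin> base_chains m"
  unfolding nonbase_def base_chains_def by auto

lemma fill_rank_card_less: "card C < card C' \<Longrightarrow> fill_rank m C < fill_rank m C'"
  unfolding fill_rank_def by simp

lemma pivot_chain_faces:
  assumes C: "C \<in> pivot_chains m" and x: "x \<in> C" "x \<noteq> pivot C"
  shows "C - {x} \<in> base_chains m \<or>
    (\<exists>C'\<in>pivot_chains m. fill_rank m C' < fill_rank m C \<and> C - {x} \<subseteq> C')"
proof (cases "C - {x} \<in> base_chains m")
  case False
  show ?thesis
  proof (cases "pivot (C - {x}) \<in> C - {x}")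
    case True
    then have "C - {x} \<in> pivot_chains m"
      using nonbase_face[OF C False] unfolding pivot_chains_def by simp
    moreover have "card (C - {x}) < card C"
      using nonbase_chain.D_finite[OF pivot_chains_nonbase[OF C]] x(1) by (rule card_Diff1_less)
    ultimately show ?thesis using fill_rank_card_less by blast
  next
    case no_pivot: False
    let ?D = "C - {x}"
    have D: "nonbase m ?D" "fill_rank m (insert (pivot ?D) ?D) < fill_rank m C"
      using fill_rank_insert_pivot_face[OF C x False no_pivot] by auto
    then have "insert (pivot ?D) ?D \<in> pivot_chains m"
      using nonbase_chain.insert_pivot[OF _ no_pivot] unfolding pivot_chains_def nonbase_chain_def
      by simp
    then show ?thesis using D(2) by blast
  qed
qed simp

text \<open>The facet opposite the pivot of C lies in no other pivot chain of rank at most that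
  of C, so filling C in rank order never meets an already filled simplex.\<close>

lemma pivot_face_unique:
  assumes C: "C \<in> pivot_chains m" and C1: "C1 \<in> pivot_chains m" "C1 \<noteq> C"
    and rank: "fill_rank m C1 \<le> fill_rank m C"
  shows "\<not> C - {pivot C} \<subseteq> C1"
proof
  let ?D = "C - {pivot C}"
  assume D_sub: "?D \<subseteq> C1"
  interpret nonbase_chain m C using pivot_chains_nonbase[OF C] .
  interpret C1: nonbase_chain m C1 using pivot_chains_nonbase[OF C1(1)] .
  have D: "nonbase m ?D" "pivot ?D = pivot C" using remove_pivot[OF C] by auto
  have zC: "pivot C \<in> C" using C unfolding pivot_chains_def by simp
  have cD: "card ?D = card C - 1" and cC: "0 < card C"
    using D_finite zC by (auto simp: card_gt_0_iff)
  have "card ?D \<le> card C1" using card_mono[OF C1.D_finite D_sub] .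
  moreover have "\<not> card C < card C1" using fill_rank_card_less[of C C1 m] rank by auto
  ultimately consider "card C1 = card ?D" | "card C1 = card C" using cD by linarith
  then show False
  proof cases
    case 1
    then have "?D = C1" using card_subset_eq[OF C1.D_finite D_sub] by simp
    then show False using C1 D(2) unfolding pivot_chains_def by auto
  next
    case 2
    have "card (C1 - ?D) = 1" using card_Diff_subset[OF _ D_sub] D_finite 2 cD cC by simp
    then obtain x where x: "C1 - ?D = {x}" by (rule card_1_singletonE)
    have C1_eq: "C1 = insert x ?D" and x_D: "x \<notin> ?D" using x D_sub by blast+
    have x_piv: "x \<noteq> pivot C"
    proof
      assume "x = pivot C"
      then have "C1 = C" using C1_eq zC by auto
      then show False using C1(2) by simp
    qed
    have D_eq: "C1 - {x} = ?D" using C1_eq x_D by blast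
    show False
    proof (cases "x = pivot C1")
      case True
      then show False using remove_pivot(2)[OF C1(1)] D(2) D_eq x_piv by simp
    next
      case False
      have "x \<in> C1" using C1_eq by simp
      moreover have "C1 - {x} \<notin> base_chains m" using nonbase_not_base[OF D(1)] D_eq by simp
      moreover have "pivot (C1 - {x}) \<notin> C1 - {x}" using D_eq D(2) by simp
      ultimately have "fill_rank m (insert (pivot (C1 - {x})) (C1 - {x})) < fill_rank m C1"
        using fill_rank_insert_pivot_face[OF C1(1) _ False] by blast
      moreover have "insert (pivot (C1 - {x})) (C1 - {x}) = C"
        unfolding D_eq D(2) using zC by (rule insert_Diff)
      ultimately show False using rank by simp
    qed
  qed
qed

lemma pivot_chains_cover:
  assumes \<sigma>: "nsimp k m \<sigma>"
  shows "verts k \<sigma> \<in> base_chains m \<union> (\<Union>C\<in>pivot_chains m. Pow C)"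
proof (cases "verts k \<sigma> \<in> base_chains m")
  case False
  let ?D = "verts k \<sigma>"
  have D: "nonbase m ?D" using False nsimp_verts_pairs[OF \<sigma>] nsimp_verts_chain[OF \<sigma>]
    unfolding nonbase_def base_chains_def verts_def by auto
  show ?thesis
  proof (cases "pivot ?D \<in> ?D")
    case True
    then show ?thesis using D unfolding pivot_chains_def by blast
  next
    case False
    then have "insert (pivot ?D) ?D \<in> pivot_chains m"
      using nonbase_chain.insert_pivot[OF _ False] D unfolding pivot_chains_def nonbase_chain_def
      by simp
    then show ?thesis by blast
  qed
qed simp

text \<open>The chains of T are attached to F in the order of rank, each along the inner
  horn at z C.\<close>

locale pivot_filtration =
  fixes E :: "'e sset" and B :: "'b sset" and p :: "nat \<Rightarrow> 'e \<Rightarrow> 'b"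
    and g :: "nat \<Rightarrow> (nat \<Rightarrow> nat \<times> nat) \<Rightarrow> 'b" and m :: nat
    and F T :: "(nat \<times> nat) set set" and z :: "(nat \<times> nat) set \<Rightarrow> nat \<times> nat"
    and rank :: "(nat \<times> nat) set \<Rightarrow> 'r::linorder"
  assumes fib: "inner_fibration E B p"
    and g: "nerve_map_on B (nerve_simplices m UNIV) g"
    and down: "down_closed F"
    and finite_T: "finite T"
    and chain: "\<And>C. C \<in> T \<Longrightarrow> finite_chain C m"
    and inner: "\<And>C. C \<in> T \<Longrightarrow> z C \<in> C \<and> (\<exists>a\<in>C. a < z C) \<and> (\<exists>b\<in>C. z C < b)"
    and faces: "\<And>C x. C \<in> T \<Longrightarrow> x \<in> C \<Longrightarrow> x \<noteq> z C \<Longrightarrow>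
      C - {x} \<in> F \<or> (\<exists>C'\<in>T. rank C' < rank C \<and> C - {x} \<subseteq> C')"
    and missing: "\<And>C. C \<in> T \<Longrightarrow> C - {z C} \<notin> F"
    and missing_unique: "\<And>C C'. C \<in> T \<Longrightarrow> C' \<in> T \<Longrightarrow> C' \<noteq> C \<Longrightarrow>
      rank C' \<le> rank C \<Longrightarrow> \<not> C - {z C} \<subseteq> C'"
begin

lemma extend_step:
  assumes S: "S \<subseteq> T" and C: "C \<in> T" "C \<notin> S"
    and below: "\<And>D. D \<in> T \<Longrightarrow> rank D < rank C \<Longrightarrow> D \<in> S"
    and max: "\<And>D. D \<in> S \<Longrightarrow> rank D \<le> rank C"
    and lift: "nerve_lift E p g m (F \<union> (\<Union>D\<in>S. Pow D)) f"
  shows "\<exists>f'. nerve_lift E p g m (F \<union> (\<Union>D\<in>S. Pow D) \<union> Pow C) f' \<and>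
    (\<forall>k \<sigma>. (k, \<sigma>) \<in> nerve_simplices m (F \<union> (\<Union>D\<in>S. Pow D)) \<longrightarrow> f' k \<sigma> = f k \<sigma>)"
proof -
  interpret finite_chain C m using chain[OF C(1)] .
  let ?F = "F \<union> (\<Union>D\<in>S. Pow D)"
  have down_F: "down_closed ?F" using down unfolding down_closed_def by blast
  obtain a b where z: "z C \<in> C" "a \<in> C" "a < z C" "b \<in> C" "z C < b"
    using inner[OF C(1)] by blast
  have faces_F: "C - {x} \<in> ?F" if "x \<in> C" "x \<noteq> z C" for x
    using faces[OF C(1) that] below by blast
  have "\<not> C - {z C} \<subseteq> D" if "D \<in> S" for D
    using missing_unique[OF C(1), of D] that S max C(2) by auto
  then have missing_F: "C - {z C} \<notin> ?F" using missing[OF C(1)] by blast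
  show ?thesis by (rule extend_over_inner_horn[OF fib down_F z faces_F missing_F lift g])
qed

lemma extend_over_pivot_chains:
  assumes lift: "nerve_lift E p g m F f"
  shows "\<exists>f'. nerve_lift E p g m (F \<union> (\<Union>C\<in>T. Pow C)) f' \<and>
    (\<forall>k \<sigma>. (k, \<sigma>) \<in> nerve_simplices m F \<longrightarrow> f' k \<sigma> = f k \<sigma>)"
proof -
  define extends where "extends S f' \<longleftrightarrow> nerve_lift E p g m (F \<union> (\<Union>C\<in>S. Pow C)) f' \<and>
    (\<forall>k \<sigma>. (k, \<sigma>) \<in> nerve_simplices m F \<longrightarrow> f' k \<sigma> = f k \<sigma>)" for S f'
  have "S \<subseteq> T \<longrightarrow> (\<forall>D\<in>S. \<forall>D'\<in>T. rank D' < rank D \<longrightarrow> D' \<in> S) \<longrightarrow> (\<exists>f'. extends S f')"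
    if "finite S" for S
    using that
  proof (induction S rule: finite_ranking_induct[where f = rank])
    case empty
    show ?case using lift unfolding extends_def by auto
  next
    case (insert C S)
    show ?case
    proof (intro impI)
      assume ST: "insert C S \<subseteq> T"
        and closed: "\<forall>D\<in>insert C S. \<forall>D'\<in>T. rank D' < rank D \<longrightarrow> D' \<in> insert C S"
      have below_C: "D \<in> S" if "D \<in> T" "rank D < rank C" for D
        using closed that by auto
      have "\<forall>D\<in>S. \<forall>D'\<in>T. rank D' < rank D \<longrightarrow> D' \<in> S"
        using below_C insert.hyps(2) by (meson less_le_trans)
      then obtain f1 where f1: "extends S f1" using insert.IH ST by blast
      show "\<exists>f'. extends (insert C S) f'"
      proof (cases "C \<in> S")
        case True
        then have "insert C S = S" by blast
        then show ?thesis using f1 by auto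
      next
        case False
        obtain f' where f': "nerve_lift E p g m (F \<union> (\<Union>D\<in>S. Pow D) \<union> Pow C) f'"
          "\<forall>k \<sigma>. (k, \<sigma>) \<in> nerve_simplices m (F \<union> (\<Union>D\<in>S. Pow D)) \<longrightarrow> f' k \<sigma> = f1 k \<sigma>"
          using extend_step[of S C f1] ST False below_C insert.hyps(2) f1
          unfolding extends_def by blast
        have "F \<union> (\<Union>D\<in>S. Pow D) \<union> Pow C = F \<union> (\<Union>D\<in>insert C S. Pow D)" by blast
        moreover have "nerve_simplices m F \<subseteq> nerve_simplices m (F \<union> (\<Union>D\<in>S. Pow D))"
          unfolding nerve_simplices_def by blast
        ultimately show ?thesis
          using f' f1 unfolding extends_def by (intro exI[of _ f']) auto
      qed
    qed
  qed
  then show ?thesis using finite_T unfolding extends_def by blast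
qed

end

lemma extend_to_nerve:
  assumes fib: "inner_fibration E B p"
    and lift: "nerve_lift E p g m (base_chains m) f"
    and g: "nerve_map_on B (nerve_simplices m UNIV) g"
  shows "\<exists>f'. nerve_lift E p g m UNIV f' \<and>
    (\<forall>k \<sigma>. (k, \<sigma>) \<in> nerve_simplices m (base_chains m) \<longrightarrow> f' k \<sigma> = f k \<sigma>)"
proof -
  interpret pivot_filtration E B p g m "base_chains m" "pivot_chains m" pivot "fill_rank m"
  proof (rule pivot_filtration.intro)
    show "down_closed (base_chains m)"
      unfolding down_closed_def using base_chains_subset by blast
    show "finite_chain C m" if "C \<in> pivot_chains m" for C
      using that nonbase_chain.D_nonempty[OF pivot_chains_nonbase[OF that]]
      unfolding finite_chain_def pivot_chains_def nonbase_def by simp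
    show "pivot C \<in> C \<and> (\<exists>a\<in>C. a < pivot C) \<and> (\<exists>b\<in>C. pivot C < b)"
      if "C \<in> pivot_chains m" for C
      using that pivot_inner unfolding pivot_chains_def by blast
    show "C - {pivot C} \<notin> base_chains m" if "C \<in> pivot_chains m" for C
      using nonbase_not_base[OF remove_pivot(1)[OF that]] .
  qed (use fib g finite_pivot_chains pivot_chain_faces pivot_face_unique in auto)
  have "nerve_simplices m (base_chains m \<union> (\<Union>C\<in>pivot_chains m. Pow C)) = nerve_simplices m UNIV"
    using pivot_chains_cover unfolding nerve_simplices_def by blast
  then show ?thesis
    using extend_over_pivot_chains[OF lift] unfolding nerve_lift_def by simp
qed

section \<open>The canonical map\<close>

definition canon_chain :: "nat \<Rightarrow> nat \<Rightarrow> nat \<times> nat" where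
  "canon_chain k = (\<lambda>i. if i \<le> k then (i, k + 1 + i) else (0, 0))"

definition vert_values :: "nat \<Rightarrow> (nat \<Rightarrow> nat \<times> nat) \<Rightarrow> nat set" where
  "vert_values k \<sigma> = fst ` verts k \<sigma> \<union> snd ` verts k \<sigma>"

lemma nsimp_post:
  assumes \<sigma>: "nsimp k m \<sigma>" and \<alpha>: "mor m m' \<alpha>"
  shows "nsimp k m' (post k \<alpha> \<sigma>)"
proof -
  have b: "fst (\<sigma> i) \<le> snd (\<sigma> i)" "snd (\<sigma> i) \<le> m" "fst (\<sigma> i) \<le> m" if "i \<le> k" for i
    using \<sigma> that unfolding nsimp_def by auto
  have post_i: "post k \<alpha> \<sigma> i = (\<alpha> (fst (\<sigma> i)), \<alpha> (snd (\<sigma> i)))" if "i \<le> k" for i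
    using that by (simp add: post_def)
  show ?thesis
    unfolding nsimp_def
  proof (intro conjI allI impI)
    fix i assume i: "i \<le> k"
    show "fst (post k \<alpha> \<sigma> i) \<le> snd (post k \<alpha> \<sigma> i)" "snd (post k \<alpha> \<sigma> i) \<le> m'"
      using post_i[OF i] mor_mono[OF \<alpha> b(1,2)[OF i]] mor_le[OF \<alpha> b(2)[OF i]] by simp_all
  next
    fix i j assume ij: "i \<le> j \<and> j \<le> k"
    then have "fst (\<sigma> i) \<le> fst (\<sigma> j)" "snd (\<sigma> i) \<le> snd (\<sigma> j)"
      using \<sigma> unfolding nsimp_def by auto
    then show "fst (post k \<alpha> \<sigma> i) \<le> fst (post k \<alpha> \<sigma> j)" "snd (post k \<alpha> \<sigma> i) \<le> snd (post k \<alpha> \<sigma> j)"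
      using post_i ij mor_mono[OF \<alpha>] b[of j] by auto
  qed (simp add: post_def)
qed

lemma post_post: "nsimp k m \<sigma> \<Longrightarrow> post k \<alpha> (post k \<beta> \<sigma>) = post k (cmp m \<alpha> \<beta>) \<sigma>"
  by (rule ext) (auto simp: post_def cmp_def nsimp_def)

lemma pre_post: "mor j k \<beta> \<Longrightarrow> pre j \<beta> (post k \<alpha> \<sigma>) = post j \<alpha> (pre j \<beta> \<sigma>)"
  by (rule ext) (auto simp: pre_def post_def mor_def)

lemma post_idm: "nsimp k m \<sigma> \<Longrightarrow> post k (idm m) \<sigma> = \<sigma>"
  by (rule ext) (auto simp: post_def idm_def nsimp_def)

lemma nsimp_canon_chain: "nsimp k (2 * k + 1) (canon_chain k)"
  unfolding nsimp_def canon_chain_def by auto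

lemma mor_join_self: assumes "mor n m \<alpha>" shows "mor (2 * n + 1) (2 * m + 1) (join_self n m \<alpha>)"
  unfolding mor_def join_self_def
proof (intro conjI allI impI)
  fix i assume "i \<le> 2 * n + 1"
  then show "(if i \<le> n then \<alpha> i else if i \<le> 2 * n + 1 then m + 1 + \<alpha> (i - (n + 1)) else 0) \<le> 2 * m + 1"
    using mor_le[OF assms, of i] mor_le[OF assms, of "i - (n + 1)"] by auto
next
  fix i j assume a: "i \<le> j \<and> j \<le> 2 * n + 1"
  then show "(if i \<le> n then \<alpha> i else if i \<le> 2 * n + 1 then m + 1 + \<alpha> (i - (n + 1)) else 0)
      \<le> (if j \<le> n then \<alpha> j else if j \<le> 2 * n + 1 then m + 1 + \<alpha> (j - (n + 1)) else 0)"
    using mor_mono[OF assms, of i j] mor_mono[OF assms, of "i - (n + 1)" "j - (n + 1)"]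
      mor_le[OF assms, of i] by auto
qed auto

lemma post_join_self_canon_chain: "mor n m \<alpha> \<Longrightarrow> post n (join_self n m \<alpha>) (canon_chain n) = pre n \<alpha> (canon_chain m)"
  by (rule ext) (auto simp: post_def join_self_def canon_chain_def pre_def mor_def)

lemma pre_post_canon_chain:
  assumes "mor l k \<beta>" "mor (2 * k + 1) m s"
  shows "pre l \<beta> (post k s (canon_chain k)) = post l (cmp (2 * l + 1) s (join_self l k \<beta>)) (canon_chain l)"
proof -
  have "post l (cmp (2 * l + 1) s (join_self l k \<beta>)) (canon_chain l) = post l s (post l (join_self l k \<beta>) (canon_chain l))"
    using post_post[OF nsimp_canon_chain] by simp
  also have "\<dots> = post l s (pre l \<beta> (canon_chain k))" using post_join_self_canon_chain[OF assms(1)] by simp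
  also have "\<dots> = pre l \<beta> (post k s (canon_chain k))" using pre_post[OF assms(1)] by simp
  finally show ?thesis by simp
qed

lemma coend_eq_refl: "coend_eq X k a a"
  unfolding coend_eq_def by simp

lemma coend_eq_sym: "coend_eq X k a b \<Longrightarrow> coend_eq X k b a"
  unfolding coend_eq_def
proof (induction rule: rtranclp_induct)
  case base then show ?case by simp
next
  case (step y z)
  then have "(\<lambda>s t. coend_step X k s t \<or> coend_step X k t s) z y" by blast
  then show ?case using step.IH by (rule converse_rtranclp_into_rtranclp)
qed

lemma coend_eq_trans: "coend_eq X k a b \<Longrightarrow> coend_eq X k b c \<Longrightarrow> coend_eq X k a c"
  unfolding coend_eq_def by simp

lemma eclass_eq: "coend_eq X k a b \<Longrightarrow> eclass X k a = eclass X k b"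
  unfolding eclass_def using coend_eq_sym coend_eq_trans by blast

lemma eclass_coend_step:
  assumes "mor m m' \<alpha>" "x \<in> sc X m'" "nsimp k m \<sigma>"
  shows "eclass X k (m, sm X m m' \<alpha> x, \<sigma>) = eclass X k (m', x, post k \<alpha> \<sigma>)"
proof -
  have "coend_step X k (m, sm X m m' \<alpha> x, \<sigma>) (m', x, post k \<alpha> \<sigma>)"
    unfolding coend_step_def using assms by blast
  then have "coend_eq X k (m, sm X m m' \<alpha> x, \<sigma>) (m', x, post k \<alpha> \<sigma>)"
    unfolding coend_eq_def by (simp add: r_into_rtranclp)
  then show ?thesis by (rule eclass_eq)
qed

definition pre_triple :: "nat \<Rightarrow> (nat \<Rightarrow> nat) \<Rightarrow> 'a etriple \<Rightarrow> 'a etriple" where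
  "pre_triple n \<beta> t = (case t of (m, x, \<sigma>) \<Rightarrow> (m, x, pre n \<beta> \<sigma>))"

lemma coend_step_pre:
  assumes X: "sset X" and \<beta>: "mor n k \<beta>" and st: "coend_step X k s t"
  shows "coend_step X n (pre_triple n \<beta> s) (pre_triple n \<beta> t)"
proof -
  from st obtain m m' \<alpha> x \<sigma> where a: "mor m m' \<alpha>" "x \<in> sc X m'" "nsimp k m \<sigma>"
    "s = (m, sm X m m' \<alpha> x, \<sigma>)" "t = (m', x, post k \<alpha> \<sigma>)"
    unfolding coend_step_def by blast
  have "pre_triple n \<beta> t = (m', x, post n \<alpha> (pre n \<beta> \<sigma>))"
    using a(5) pre_post[OF \<beta>] unfolding pre_triple_def by simp
  moreover have "pre_triple n \<beta> s = (m, sm X m m' \<alpha> x, pre n \<beta> \<sigma>)" using a(4) unfolding pre_triple_def by simp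
  moreover have "nsimp n m (pre n \<beta> \<sigma>)" using nsimp_pre[OF a(3) \<beta>] .
  ultimately show ?thesis unfolding coend_step_def using a(1,2) by blast
qed

lemma coend_eq_pre:
  assumes X: "sset X" and \<beta>: "mor n k \<beta>"
  shows "coend_eq X k a b \<Longrightarrow> coend_eq X n (pre_triple n \<beta> a) (pre_triple n \<beta> b)"
  unfolding coend_eq_def
proof (induction rule: rtranclp_induct)
  case base then show ?case by simp
next
  case (step y z)
  then have "coend_step X n (pre_triple n \<beta> y) (pre_triple n \<beta> z) \<or> coend_step X n (pre_triple n \<beta> z) (pre_triple n \<beta> y)"
    using coend_step_pre[OF X \<beta>] by blast
  then have "(\<lambda>s t. coend_step X n s t \<or> coend_step X n t s) (pre_triple n \<beta> y) (pre_triple n \<beta> z)" by blast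
  with step.IH show ?case by (rule rtranclp.rtrancl_into_rtrancl)
qed

lemma eclass_self: "t \<in> etriples X k \<Longrightarrow> t \<in> eclass X k t"
  unfolding eclass_def by (simp add: coend_eq_refl)

text \<open>ESd' X acts on a class through an arbitrary representative; the result does not
  depend on the choice because pre respects coend_eq.\<close>

lemma sm_ESd'_eclass:
  assumes X: "sset X" and t: "t \<in> etriples X k" and \<beta>: "mor l k \<beta>"
  shows "sm (ESd' X) l k \<beta> (eclass X k t) = eclass X l (pre_triple l \<beta> t)"
proof -
  define t' where "t' = (SOME t'. t' \<in> eclass X k t)"
  have "t' \<in> eclass X k t" unfolding t'_def using eclass_self[OF t] by (rule someI)
  then have ce: "coend_eq X k t t'" unfolding eclass_def by simp
  obtain m' x' \<sigma>' where t'eq: "t' = (m', x', \<sigma>')" by (cases t') auto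
  have "sm (ESd' X) l k \<beta> (eclass X k t) = eclass X l (m', x', pre l \<beta> \<sigma>')"
    unfolding ESd'_def by (simp add: t'_def[symmetric] t'eq)
  also have "\<dots> = eclass X l (pre_triple l \<beta> t')" unfolding pre_triple_def t'eq by simp
  also have "\<dots> = eclass X l (pre_triple l \<beta> t)"
    using eclass_eq[OF coend_eq_pre[OF X \<beta> ce]] by simp
  finally show ?thesis .
qed

lemma etriplesI: "x \<in> sc X m \<Longrightarrow> nsimp k m \<sigma> \<Longrightarrow> (m, x, \<sigma>) \<in> etriples X k"
  unfolding etriples_def by simp

lemma eclass_in_sc_ESd': "x \<in> sc X m \<Longrightarrow> nsimp k m \<sigma> \<Longrightarrow> eclass X k (m, x, \<sigma>) \<in> sc (ESd' X) k"
  unfolding ESd'_def by (auto intro: etriplesI)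

lemma sc_ESd'E:
  assumes "c \<in> sc (ESd' X) k"
  obtains m x \<sigma> where "x \<in> sc X m" "nsimp k m \<sigma>" "c = eclass X k (m, x, \<sigma>)"
  using assms unfolding ESd'_def etriples_def by auto

lemma eclass_nerve_map:
  assumes X: "sset X" and v: "sset_map (ESd' X) B v" and x: "x \<in> sc X m"
  shows "nerve_map_on B (nerve_simplices m UNIV) (\<lambda>k \<sigma>. v k (eclass X k (m, x, \<sigma>)))"
  unfolding nerve_map_on_def
proof (intro conjI allI impI)
  fix k \<sigma> assume "(k, \<sigma>) \<in> nerve_simplices m UNIV"
  then show "v k (eclass X k (m, x, \<sigma>)) \<in> sc B k"
    using v eclass_in_sc_ESd'[OF x] unfolding sset_map_def nerve_simplices_def by simp
next
  fix k l \<beta> \<sigma> assume a: "mor l k \<beta> \<and> (k, \<sigma>) \<in> nerve_simplices m UNIV"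
  then have \<beta>: "mor l k \<beta>" and \<sigma>: "nsimp k m \<sigma>" unfolding nerve_simplices_def by auto
  have "v l (eclass X l (m, x, pre l \<beta> \<sigma>)) = v l (sm (ESd' X) l k \<beta> (eclass X k (m, x, \<sigma>)))"
    using sm_ESd'_eclass[OF X etriplesI[OF x \<sigma>] \<beta>] by (simp add: pre_triple_def)
  also have "\<dots> = sm B l k \<beta> (v k (eclass X k (m, x, \<sigma>)))"
    using v \<beta> eclass_in_sc_ESd'[OF x \<sigma>] unfolding sset_map_def by simp
  finally show "v l (eclass X l (m, x, pre l \<beta> \<sigma>)) = sm B l k \<beta> (v k (eclass X k (m, x, \<sigma>)))" .
qed

lemma canon_eclass: "canon X k y = eclass X k (2 * k + 1, y, canon_chain k)"
  unfolding canon_def canon_chain_def by simp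

lemma canon_sset_map:
  assumes X: "sset X"
  shows "sset_map (ESd X) (ESd' X) (canon X)"
  unfolding sset_map_def
proof (intro conjI allI impI)
  fix n x assume "x \<in> sc (ESd X) n"
  then have "x \<in> sc X (2 * n + 1)" unfolding ESd_def by simp
  then have "(2 * n + 1, x, canon_chain n) \<in> etriples X n" by (rule etriplesI[OF _ nsimp_canon_chain])
  then show "canon X n x \<in> sc (ESd' X) n"
    unfolding canon_eclass using imageI[of _ _ "eclass X n"] unfolding ESd'_def by simp
next
  fix n m \<alpha> x assume a: "mor n m \<alpha> \<and> x \<in> sc (ESd X) m"
  then have \<alpha>: "mor n m \<alpha>" and x: "x \<in> sc X (2 * m + 1)" unfolding ESd_def by auto
  have "canon X n (sm (ESd X) n m \<alpha> x) = eclass X n (2 * n + 1, sm X (2 * n + 1) (2 * m + 1) (join_self n m \<alpha>) x, canon_chain n)"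
    unfolding canon_eclass ESd_def by simp
  also have "\<dots> = eclass X n (2 * m + 1, x, post n (join_self n m \<alpha>) (canon_chain n))"
    by (rule eclass_coend_step[OF mor_join_self[OF \<alpha>] x nsimp_canon_chain])
  also have "\<dots> = eclass X n (pre_triple n \<alpha> (2 * m + 1, x, canon_chain m))"
    unfolding pre_triple_def using post_join_self_canon_chain[OF \<alpha>] by simp
  also have "\<dots> = sm (ESd' X) n m \<alpha> (canon X m x)"
    unfolding canon_eclass using sm_ESd'_eclass[OF X etriplesI[OF x nsimp_canon_chain] \<alpha>] by simp
  finally show "canon X n (sm (ESd X) n m \<alpha> x) = sm (ESd' X) n m \<alpha> (canon X m x)" .
qed

lemma vert_values_post: "vert_values k (post k h \<sigma>) = h ` vert_values k \<sigma>"
proof -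
  have "verts k (post k h \<sigma>) = (\<lambda>x. (h (fst x), h (snd x))) ` verts k \<sigma>"
    unfolding verts_def image_image by (rule image_cong) (auto simp: post_def)
  then show ?thesis unfolding vert_values_def by (simp add: image_Un image_image)
qed

lemma vert_values_subset: "nsimp k m \<sigma> \<Longrightarrow> vert_values k \<sigma> \<subseteq> {0..m}"
  unfolding vert_values_def verts_def nsimp_def by force

lemma covers_iff_vert_values: "covers m (verts k \<sigma>) \<longleftrightarrow> {0..m} \<subseteq> vert_values k \<sigma>"
  unfolding covers_def vert_values_def by force

lemma vert_values_covers: "nsimp k r \<sigma> \<Longrightarrow> covers r (verts k \<sigma>) \<Longrightarrow> vert_values k \<sigma> = {0..r}"
  using vert_values_subset covers_iff_vert_values by blast

lemma finite_vert_values: "finite (vert_values k \<sigma>)"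
  unfolding vert_values_def verts_def by simp

lemma vert_values_nonempty: "vert_values k \<sigma> \<noteq> {}"
  unfolding vert_values_def verts_def by auto

definition index_simplex :: "nat set \<Rightarrow> nat \<Rightarrow> (nat \<Rightarrow> nat \<times> nat) \<Rightarrow> nat \<Rightarrow> nat \<times> nat" where
  "index_simplex V k \<sigma> i =
    (if i \<le> k then (index_in V (fst (\<sigma> i)), index_in V (snd (\<sigma> i))) else (0, 0))"

lemma nsimp_covering_factor:
  assumes \<sigma>: "nsimp k q \<sigma>"
  obtains r \<epsilon> \<sigma>' where "inj_mor r q \<epsilon>" "nsimp k r \<sigma>'" "covers r (verts k \<sigma>')" "\<sigma> = post k \<epsilon> \<sigma>'"
proof -
  define V where "V = vert_values k \<sigma>"
  have V: "finite V" "V \<noteq> {}" "V \<subseteq> {0..q}"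
    unfolding V_def using finite_vert_values vert_values_nonempty vert_values_subset[OF \<sigma>] by auto
  define r where "r = card V - 1"
  have card: "card V = Suc r" using V by (simp add: r_def card_gt_0_iff)
  have in_V: "fst (\<sigma> i) \<in> V" "snd (\<sigma> i) \<in> V" if "i \<le> k" for i
    using that unfolding V_def vert_values_def verts_def by auto
  have index_le: "index_in V v \<le> r" if "v \<in> V" for v
    using index_in_less_card[OF V(1) that] card by simp
  have "nsimp k r (index_simplex V k \<sigma>)"
    using \<sigma> index_in_mono[OF V(1)] index_le in_V
    unfolding nsimp_def index_simplex_def by auto
  moreover have "covers r (verts k (index_simplex V k \<sigma>))"
    unfolding covers_def
  proof (intro allI impI)
    fix v assume v: "v \<le> r"
    then have "enumerate V v \<in> V" using finite_enumerate_in_set[OF V(1)] card by simp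
    then obtain i where i: "i \<le> k" "fst (\<sigma> i) = enumerate V v \<or> snd (\<sigma> i) = enumerate V v"
      unfolding V_def vert_values_def verts_def by auto
    moreover have "index_in V (enumerate V v) = v" using index_in_enumerate[OF V(1)] v card by simp
    ultimately show "\<exists>y\<in>verts k (index_simplex V k \<sigma>). fst y = v \<or> snd y = v"
      unfolding verts_def index_simplex_def by force
  qed
  moreover have "\<sigma> = post k (enum_mor V) (index_simplex V k \<sigma>)"
    using \<sigma> enumerate_index_in[OF V(1)] index_in_less_card[OF V(1)] in_V
    by (intro ext) (auto simp: post_def enum_mor_def index_simplex_def nsimp_def prod_eq_iff)
  ultimately show thesis
    using that inj_mor_enum_mor[OF V] unfolding r_def by blast
qed

lemma post_inj_mor_cancel:
  assumes \<delta>: "inj_mor r m \<delta>" and s1: "nsimp k r \<sigma>1" and s2: "nsimp k r \<sigma>2"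
    and eq: "post k \<delta> \<sigma>1 = post k \<delta> \<sigma>2"
  shows "\<sigma>1 = \<sigma>2"
proof (rule nsimp_eqI[OF s1 s2])
  fix i assume i: "i \<le> k"
  have inj: "\<And>a b. a \<le> r \<Longrightarrow> b \<le> r \<Longrightarrow> \<delta> a = \<delta> b \<Longrightarrow> a = b"
    using \<delta> unfolding inj_mor_def by (metis linorder_neqE_nat order_less_irrefl)
  have "\<delta> (fst (\<sigma>1 i)) = \<delta> (fst (\<sigma>2 i))" "\<delta> (snd (\<sigma>1 i)) = \<delta> (snd (\<sigma>2 i))"
    using fun_cong[OF eq, of i] i unfolding post_def by auto
  moreover have "fst (\<sigma>1 i) \<le> r" "snd (\<sigma>1 i) \<le> r" "fst (\<sigma>2 i) \<le> r" "snd (\<sigma>2 i) \<le> r"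
    using s1 s2 i unfolding nsimp_def by (auto intro: le_trans)
  ultimately show "\<sigma>1 i = \<sigma>2 i" using inj by (simp add: prod_eq_iff)
qed

lemma not_covers_post:
  assumes "q' < m" "mor q' m \<alpha>" "nsimp k q' \<sigma>'"
  shows "\<not> covers m (verts k (post k \<alpha> \<sigma>'))"
proof
  assume "covers m (verts k (post k \<alpha> \<sigma>'))"
  then have "{0..m} \<subseteq> \<alpha> ` vert_values k \<sigma>'" using covers_iff_vert_values vert_values_post by metis
  also have "\<dots> \<subseteq> \<alpha> ` {0..q'}" using vert_values_subset[OF assms(3)] by blast
  finally have "card {0..m} \<le> card (\<alpha> ` {0..q'})" by (intro card_mono) auto
  also have "\<dots> \<le> card {0..q'}" by (rule card_image_le) simp
  finally show False using assms(1) by simp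
qed

lemma esd_chain_post_canon_chain: "mor (2 * k + 1) m s \<Longrightarrow> esd_chain (verts k (post k s (canon_chain k)))"
  unfolding esd_chain_def verts_def post_def canon_chain_def mor_def by auto

lemma esd_chain_eq_post_canon_chain:
  assumes ns: "nsimp k m \<sigma>" and e: "esd_chain (verts k \<sigma>)"
  shows "\<exists>s. mor (2 * k + 1) m s \<and> \<sigma> = post k s (canon_chain k)"
proof -
  define s where "s = (\<lambda>i. if i \<le> k then fst (\<sigma> i) else if i \<le> 2 * k + 1 then snd (\<sigma> (i - (k + 1))) else 0)"
  have E: "i \<le> k \<Longrightarrow> j \<le> k \<Longrightarrow> fst (\<sigma> i) \<le> snd (\<sigma> j)" for i j
    using e unfolding esd_chain_def verts_def by auto
  have "mor (2 * k + 1) m s" unfolding mor_def s_def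
  proof (intro conjI allI impI)
    fix i assume "i \<le> 2 * k + 1"
    then show "(if i \<le> k then fst (\<sigma> i) else if i \<le> 2 * k + 1 then snd (\<sigma> (i - (k + 1))) else 0) \<le> m"
      using ns unfolding nsimp_def by (auto intro: le_trans)
  next
    fix i j assume a: "i \<le> j \<and> j \<le> 2 * k + 1"
    show "(if i \<le> k then fst (\<sigma> i) else if i \<le> 2 * k + 1 then snd (\<sigma> (i - (k + 1))) else 0)
        \<le> (if j \<le> k then fst (\<sigma> j) else if j \<le> 2 * k + 1 then snd (\<sigma> (j - (k + 1))) else 0)"
      using a E[of i "j - (k + 1)"] nsimp_pair_le[OF ns, of i j] nsimp_pair_le[OF ns, of "i - (k + 1)" "j - (k + 1)"]
      unfolding pair_le_def by auto
  qed auto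
  moreover have "\<sigma> = post k s (canon_chain k)"
    by (rule ext) (use ns in \<open>auto simp: post_def canon_chain_def s_def nsimp_def\<close>)
  ultimately show ?thesis by blast
qed

lemma post_canon_chain_inj:
  assumes "mor (2 * k + 1) m s" "mor (2 * k + 1) m' s'" "post k s (canon_chain k) = post k s' (canon_chain k)"
  shows "s = s'"
proof (rule mor_eqI[OF assms(1,2)])
  fix i assume i: "i \<le> 2 * k + 1"
  show "s i = s' i"
  proof (cases "i \<le> k")
    case True
    then show ?thesis using fun_cong[OF assms(3), of i] by (simp add: post_def canon_chain_def)
  next
    case False
    then have "i - (k + 1) \<le> k" "k + 1 + (i - (k + 1)) = i" using i by auto
    then show ?thesis using fun_cong[OF assms(3), of "i - (k + 1)"] by (simp add: post_def canon_chain_def)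
  qed
qed

lemma vert_values_canon_chain: "vert_values k (canon_chain k) = {0..2 * k + 1}"
proof
  show "vert_values k (canon_chain k) \<subseteq> {0..2 * k + 1}" using vert_values_subset[OF nsimp_canon_chain] .
  show "{0..2 * k + 1} \<subseteq> vert_values k (canon_chain k)"
  proof
    fix v assume v: "v \<in> {0..2 * k + 1}"
    show "v \<in> vert_values k (canon_chain k)"
    proof (cases "v \<le> k")
      case True
      then have "canon_chain k v \<in> verts k (canon_chain k)" unfolding verts_def by auto
      then show ?thesis using True unfolding vert_values_def canon_chain_def by force
    next
      case False
      then have "canon_chain k (v - (k + 1)) \<in> verts k (canon_chain k)" using v unfolding verts_def by auto
      moreover have "snd (canon_chain k (v - (k + 1))) = v" using False v unfolding canon_chain_def by auto
      ultimately show ?thesis unfolding vert_values_def by force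
    qed
  qed
qed

lemma canon_not_covers_factor:
  assumes s: "mor (2 * k + 1) m s" and nc: "\<not> covers m (verts k (post k s (canon_chain k)))"
  shows "\<exists>r \<delta> e. r < m \<and> inj_mor r m \<delta> \<and> mor (2 * k + 1) r e \<and> s = cmp (2 * k + 1) \<delta> e"
proof -
  obtain r e \<delta> where f: "surj_mor (2 * k + 1) r e" "inj_mor r m \<delta>" "s = cmp (2 * k + 1) \<delta> e"
    using mor_surj_inj_factor[OF s] by blast
  have "r \<le> m" using inj_mor_dim_le[OF f(2)] .
  moreover have "r \<noteq> m"
  proof
    assume rm: "r = m"
    then have "\<delta> = idm m" using inj_mor_endo f(2) by simp
    then have "s = e" using f(3) cmp_idm_left surj_mor_mor[OF f(1)] rm by simp
    then have "s ` {0..2 * k + 1} = {0..m}" using surj_mor_image f(1) rm by simp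
    moreover have "vert_values k (post k s (canon_chain k)) = s ` {0..2 * k + 1}" using vert_values_post[of k s "canon_chain k"] vert_values_canon_chain by simp
    ultimately have "covers m (verts k (post k s (canon_chain k)))" using covers_iff_vert_values by simp
    then show False using nc by simp
  qed
  ultimately have "r < m" by simp
  then show ?thesis using f(2,3) surj_mor_mor[OF f(1)] by blast
qed

lemma base_chains_cases:
  assumes \<sigma>: "nsimp k m \<sigma>" and base: "verts k \<sigma> \<in> base_chains m"
  obtains (face) q' \<alpha> \<sigma>' where "q' < m" "mor q' m \<alpha>" "nsimp k q' \<sigma>'" "\<sigma> = post k \<alpha> \<sigma>'"
    | (esd) s where "mor (2 * k + 1) m s" "\<sigma> = post k s (canon_chain k)"
proof (cases "esd_chain (verts k \<sigma>)")
  case True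
  then show thesis using esd_chain_eq_post_canon_chain[OF \<sigma>] esd by blast
next
  case False
  then have not_covers: "\<not> covers m (verts k \<sigma>)" using base unfolding base_chains_def by simp
  obtain r \<epsilon> \<sigma>' where f: "inj_mor r m \<epsilon>" "nsimp k r \<sigma>'" "covers r (verts k \<sigma>')" "\<sigma> = post k \<epsilon> \<sigma>'"
    using nsimp_covering_factor[OF \<sigma>] by blast
  have "r \<noteq> m"
  proof
    assume "r = m"
    then have "\<sigma> = \<sigma>'" using inj_mor_endo f(1) f(4) post_idm[OF f(2)] by simp
    then show False using not_covers f(3) \<open>r = m\<close> by simp
  qed
  then have "r < m" using inj_mor_dim_le[OF f(1)] by simp
  then show thesis using face f inj_mor_mor by blast
qed

section \<open>Solving a lifting problem cell by cell\<close>

locale lifting_problem =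
  fixes X :: "'a sset" and E :: "'e sset" and B :: "'b sset"
    and p :: "nat \<Rightarrow> 'e \<Rightarrow> 'b" and u :: "nat \<Rightarrow> 'a \<Rightarrow> 'e" and v :: "nat \<Rightarrow> 'a etriple set \<Rightarrow> 'b"
  assumes X: "sset X" and fib: "inner_fibration E B p"
    and u: "sset_map (ESd X) E u" and v: "sset_map (ESd' X) B v"
    and u_v: "\<And>n a. a \<in> sc (ESd X) n \<Longrightarrow> p n (u n a) = v n (canon X n a)"
begin

lemma u_sc: "a \<in> sc X (2 * k + 1) \<Longrightarrow> u k a \<in> sc E k"
  using u unfolding sset_map_def ESd_def by simp

lemma u_natural: "mor l k \<beta> \<Longrightarrow> a \<in> sc X (2 * k + 1) \<Longrightarrow>
    u l (sm X (2 * l + 1) (2 * k + 1) (join_self l k \<beta>) a) = sm E l k \<beta> (u k a)"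
  using u unfolding sset_map_def ESd_def by simp

lemma u_v_canon_chain: "a \<in> sc X (2 * k + 1) \<Longrightarrow> p k (u k a) = v k (eclass X k (2 * k + 1, a, canon_chain k))"
  using u_v unfolding ESd_def canon_eclass by simp

text \<open>W q y is meant to be a lift of the cell y : N(Fun([1],[q])) --> ESd' X of a
  nondegenerate q-simplex y; ez_lift W extends it to all simplices of X through their
  Eilenberg-Zilber decomposition.\<close>

definition ez_lift ::
    "(nat \<Rightarrow> 'a \<Rightarrow> nat \<Rightarrow> (nat \<Rightarrow> nat \<times> nat) \<Rightarrow> 'e) \<Rightarrow> nat \<Rightarrow> 'a \<Rightarrow> nat \<Rightarrow> (nat \<Rightarrow> nat \<times> nat) \<Rightarrow> 'e" where
  "ez_lift W q x k \<sigma> = (case ez_decomp X q x of (q0, s, y) \<Rightarrow> W q0 y k (post k s \<sigma>))"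

definition cell_lift ::
    "nat \<Rightarrow> 'a \<Rightarrow> (nat \<Rightarrow> (nat \<Rightarrow> nat \<times> nat) \<Rightarrow> 'e) \<Rightarrow> (nat \<Rightarrow> 'a \<Rightarrow> nat \<Rightarrow> (nat \<Rightarrow> nat \<times> nat) \<Rightarrow> 'e) \<Rightarrow> bool" where
  "cell_lift m y F W \<longleftrightarrow> nerve_lift E p (\<lambda>k \<sigma>. v k (eclass X k (m, y, \<sigma>))) m UNIV F \<and>
     (\<forall>q' \<alpha> k \<sigma>'. q' < m \<and> mor q' m \<alpha> \<and> nsimp k q' \<sigma>' \<longrightarrow>
        F k (post k \<alpha> \<sigma>') = ez_lift W q' (sm X q' m \<alpha> y) k \<sigma>') \<and>
     (\<forall>k s. mor (2 * k + 1) m s \<longrightarrow> F k (post k s (canon_chain k)) = u k (sm X (2 * k + 1) m s y))"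

definition cell_lifts_below :: "(nat \<Rightarrow> 'a \<Rightarrow> nat \<Rightarrow> (nat \<Rightarrow> nat \<times> nat) \<Rightarrow> 'e) \<Rightarrow> nat \<Rightarrow> bool" where
  "cell_lifts_below W M \<longleftrightarrow> (\<forall>q<M. \<forall>y. nondegenerate X q y \<longrightarrow> cell_lift q y (W q y) W)"

lemma ez_lift_nondegenerate:
  assumes "nondegenerate X q y"
  shows "ez_lift W q y k \<sigma> = W q y k (post k (idm q) \<sigma>)"
proof -
  have "sm X q q (idm q) y = y" using sset_sm_idm[OF X nondegenerate_sc[OF assms]] .
  then have "ez_decomp X q y = (q, idm q, y)" using ez_decomp_eq[OF X surj_mor_idm assms] by simp
  then show ?thesis unfolding ez_lift_def by simp
qed

context
  fixes W M
  assumes below: "cell_lifts_below W M"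
begin

lemma cell_liftD: "q < M \<Longrightarrow> nondegenerate X q y \<Longrightarrow> cell_lift q y (W q y) W"
  using below unfolding cell_lifts_below_def by blast

lemma W_nerve_lift:
  "q < M \<Longrightarrow> nondegenerate X q y \<Longrightarrow> nerve_lift E p (\<lambda>k \<sigma>. v k (eclass X k (q, y, \<sigma>))) q UNIV (W q y)"
  using cell_liftD unfolding cell_lift_def by blast

lemma W_sc: "q < M \<Longrightarrow> nondegenerate X q y \<Longrightarrow> nsimp k q \<sigma> \<Longrightarrow> W q y k \<sigma> \<in> sc E k"
  using W_nerve_lift unfolding nerve_lift_def nerve_map_on_def nerve_simplices_def by blast

lemma W_natural: "q < M \<Longrightarrow> nondegenerate X q y \<Longrightarrow> nsimp k q \<sigma> \<Longrightarrow> mor l k \<beta> \<Longrightarrow>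
    W q y l (pre l \<beta> \<sigma>) = sm E l k \<beta> (W q y k \<sigma>)"
  using W_nerve_lift unfolding nerve_lift_def nerve_map_on_def nerve_simplices_def by blast

lemma W_p: "q < M \<Longrightarrow> nondegenerate X q y \<Longrightarrow> nsimp k q \<sigma> \<Longrightarrow> p k (W q y k \<sigma>) = v k (eclass X k (q, y, \<sigma>))"
  using W_nerve_lift unfolding nerve_lift_def nerve_simplices_def by blast

lemma W_boundary: "q < M \<Longrightarrow> nondegenerate X q y \<Longrightarrow> q' < q \<Longrightarrow> mor q' q \<alpha> \<Longrightarrow> nsimp k q' \<sigma>' \<Longrightarrow>
    W q y k (post k \<alpha> \<sigma>') = ez_lift W q' (sm X q' q \<alpha> y) k \<sigma>'"
  using cell_liftD unfolding cell_lift_def by blast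

lemma W_esd: "q < M \<Longrightarrow> nondegenerate X q y \<Longrightarrow> mor (2 * k + 1) q s \<Longrightarrow>
    W q y k (post k s (canon_chain k)) = u k (sm X (2 * k + 1) q s y)"
  using cell_liftD unfolding cell_lift_def by blast

lemma W_inj_mor: assumes "q < M" "nondegenerate X q y" "inj_mor r q \<delta>" "nsimp k r \<sigma>"
  shows "W q y k (post k \<delta> \<sigma>) = ez_lift W r (sm X r q \<delta> y) k \<sigma>"
proof (cases "r < q")
  case True then show ?thesis using W_boundary assms inj_mor_mor by blast
next
  case False
  then have rq: "r = q" using inj_mor_dim_le[OF assms(3)] by simp
  then have "\<delta> = idm q" using inj_mor_endo assms(3) by simp
  then show ?thesis using rq ez_lift_nondegenerate[OF assms(2)] sset_sm_idm[OF X nondegenerate_sc[OF assms(2)]] by simp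
qed

lemma ez_lift_sc: "q < M \<Longrightarrow> x \<in> sc X q \<Longrightarrow> nsimp k q \<sigma> \<Longrightarrow> ez_lift W q x k \<sigma> \<in> sc E k"
proof -
  assume a: "q < M" "x \<in> sc X q" "nsimp k q \<sigma>"
  obtain q0 s y where e: "ez_decomp X q x = (q0, s, y)" "surj_mor q q0 s" "nondegenerate X q0 y" "x = sm X q q0 s y"
    using ez_decompE[OF X a(2)] by blast
  have "q0 < M" using surj_mor_dim_le[OF e(2)] a(1) by simp
  then show ?thesis unfolding ez_lift_def e(1) using W_sc e(3) nsimp_post[OF a(3) surj_mor_mor[OF e(2)]] by simp
qed

lemma ez_lift_natural: "q < M \<Longrightarrow> x \<in> sc X q \<Longrightarrow> nsimp k q \<sigma> \<Longrightarrow> mor l k \<beta> \<Longrightarrow>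
    ez_lift W q x l (pre l \<beta> \<sigma>) = sm E l k \<beta> (ez_lift W q x k \<sigma>)"
proof -
  assume a: "q < M" "x \<in> sc X q" "nsimp k q \<sigma>" "mor l k \<beta>"
  obtain q0 s y where e: "ez_decomp X q x = (q0, s, y)" "surj_mor q q0 s" "nondegenerate X q0 y" "x = sm X q q0 s y"
    using ez_decompE[OF X a(2)] by blast
  have "q0 < M" using surj_mor_dim_le[OF e(2)] a(1) by simp
  then show ?thesis unfolding ez_lift_def e(1)
    using W_natural[OF _ e(3) nsimp_post[OF a(3) surj_mor_mor[OF e(2)]] a(4)] pre_post[OF a(4)] by simp
qed

lemma ez_lift_p: "q < M \<Longrightarrow> x \<in> sc X q \<Longrightarrow> nsimp k q \<sigma> \<Longrightarrow>
    p k (ez_lift W q x k \<sigma>) = v k (eclass X k (q, x, \<sigma>))"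
proof -
  assume a: "q < M" "x \<in> sc X q" "nsimp k q \<sigma>"
  obtain q0 s y where e: "ez_decomp X q x = (q0, s, y)" "surj_mor q q0 s" "nondegenerate X q0 y" "x = sm X q q0 s y"
    using ez_decompE[OF X a(2)] by blast
  have "q0 < M" using surj_mor_dim_le[OF e(2)] a(1) by simp
  then have "p k (ez_lift W q x k \<sigma>) = v k (eclass X k (q0, y, post k s \<sigma>))"
    unfolding ez_lift_def e(1) using W_p e(3) nsimp_post[OF a(3) surj_mor_mor[OF e(2)]] by simp
  also have "\<dots> = v k (eclass X k (q, x, \<sigma>))"
    using eclass_coend_step[OF surj_mor_mor[OF e(2)] nondegenerate_sc[OF e(3)] a(3)] e(4) by simp
  finally show ?thesis .
qed

lemma ez_lift_sm:
  assumes q: "q < M" and x: "x \<in> sc X q" and \<alpha>: "mor q' q \<alpha>" and \<sigma>: "nsimp k q' \<sigma>"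
  shows "ez_lift W q' (sm X q' q \<alpha> x) k \<sigma> = ez_lift W q x k (post k \<alpha> \<sigma>)"
proof -
  obtain q0 s y where e: "ez_decomp X q x = (q0, s, y)" "surj_mor q q0 s" "nondegenerate X q0 y" "x = sm X q q0 s y"
    using ez_decompE[OF X x] by blast
  have q0M: "q0 < M" using surj_mor_dim_le[OF e(2)] q by simp
  have ysc: "y \<in> sc X q0" using nondegenerate_sc[OF e(3)] .
  have hm: "mor q' q0 (cmp q' s \<alpha>)" using mor_cmp[OF \<alpha> surj_mor_mor[OF e(2)]] .
  obtain r ee \<delta> where f: "surj_mor q' r ee" "inj_mor r q0 \<delta>" "cmp q' s \<alpha> = cmp q' \<delta> ee"
    using mor_surj_inj_factor[OF hm] by blast
  have dysc: "sm X r q0 \<delta> y \<in> sc X r" using sset_sm_closed[OF X inj_mor_mor[OF f(2)] ysc] .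
  obtain q1 t y1 where e1: "ez_decomp X r (sm X r q0 \<delta> y) = (q1, t, y1)" "surj_mor r q1 t" "nondegenerate X q1 y1"
    "sm X r q0 \<delta> y = sm X r q1 t y1"
    using ez_decompE[OF X dysc] by blast
  have y1sc: "y1 \<in> sc X q1" using nondegenerate_sc[OF e1(3)] .
  have "sm X q' q \<alpha> x = sm X q' q0 (cmp q' s \<alpha>) y"
    using e(4) sset_sm_cmp[OF X \<alpha> surj_mor_mor[OF e(2)] ysc] by simp
  also have "\<dots> = sm X q' r ee (sm X r q0 \<delta> y)"
    using f(3) sset_sm_cmp[OF X surj_mor_mor[OF f(1)] inj_mor_mor[OF f(2)] ysc] by simp
  also have "\<dots> = sm X q' q1 (cmp q' t ee) y1"
    using e1(4) sset_sm_cmp[OF X surj_mor_mor[OF f(1)] surj_mor_mor[OF e1(2)] y1sc] by simp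
  finally have xa: "sm X q' q \<alpha> x = sm X q' q1 (cmp q' t ee) y1" .
  have st: "surj_mor q' q1 (cmp q' t ee)" using surj_mor_cmp[OF f(1) e1(2)] .
  have "ez_lift W q' (sm X q' q \<alpha> x) k \<sigma> = W q1 y1 k (post k (cmp q' t ee) \<sigma>)"
    unfolding ez_lift_def xa ez_decomp_eq[OF X st e1(3)] by simp
  also have "\<dots> = W q1 y1 k (post k t (post k ee \<sigma>))" using post_post[OF \<sigma>] by simp
  also have "\<dots> = ez_lift W r (sm X r q0 \<delta> y) k (post k ee \<sigma>)" unfolding ez_lift_def e1(1) by simp
  also have "\<dots> = W q0 y k (post k \<delta> (post k ee \<sigma>))"
    using W_inj_mor[OF q0M e(3) f(2) nsimp_post[OF \<sigma> surj_mor_mor[OF f(1)]]] by simp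
  also have "\<dots> = W q0 y k (post k (cmp q' s \<alpha>) \<sigma>)" using post_post[OF \<sigma>] f(3) by simp
  also have "\<dots> = W q0 y k (post k s (post k \<alpha> \<sigma>))" using post_post[OF \<sigma>] by simp
  also have "\<dots> = ez_lift W q x k (post k \<alpha> \<sigma>)" unfolding ez_lift_def e(1) by simp
  finally show ?thesis .
qed

lemma ez_lift_canon_chain:
  assumes q: "q < M" and x: "x \<in> sc X q" and s': "mor (2 * k + 1) q s'"
  shows "ez_lift W q x k (post k s' (canon_chain k)) = u k (sm X (2 * k + 1) q s' x)"
proof -
  obtain q0 s y where e: "ez_decomp X q x = (q0, s, y)" "surj_mor q q0 s" "nondegenerate X q0 y" "x = sm X q q0 s y"
    using ez_decompE[OF X x] by blast
  have q0M: "q0 < M" using surj_mor_dim_le[OF e(2)] q by simp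
  have "ez_lift W q x k (post k s' (canon_chain k)) = W q0 y k (post k (cmp (2 * k + 1) s s') (canon_chain k))"
    unfolding ez_lift_def e(1) using post_post[OF nsimp_canon_chain] by simp
  also have "\<dots> = u k (sm X (2 * k + 1) q0 (cmp (2 * k + 1) s s') y)"
    using W_esd[OF q0M e(3) mor_cmp[OF s' surj_mor_mor[OF e(2)]]] .
  also have "\<dots> = u k (sm X (2 * k + 1) q s' x)"
    using e(4) sset_sm_cmp[OF X s' surj_mor_mor[OF e(2)] nondegenerate_sc[OF e(3)]] by simp
  finally show ?thesis .
qed

lemma ez_lift_normal_form:
  assumes y: "y \<in> sc X mm" and q1: "q1 < M" and \<alpha>: "mor q1 mm \<alpha>" and \<sigma>: "nsimp k q1 \<sigma>"
  shows "\<exists>r \<delta> \<tau>. r \<le> q1 \<and> inj_mor r mm \<delta> \<and> nsimp k r \<tau> \<and> \<delta> ` {0..r} = vert_values k (post k \<alpha> \<sigma>)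
     \<and> post k \<delta> \<tau> = post k \<alpha> \<sigma> \<and> ez_lift W q1 (sm X q1 mm \<alpha> y) k \<sigma> = ez_lift W r (sm X r mm \<delta> y) k \<tau>"
proof -
  obtain r1 \<epsilon> \<sigma>'' where vf: "inj_mor r1 q1 \<epsilon>" "nsimp k r1 \<sigma>''" "covers r1 (verts k \<sigma>'')" "\<sigma> = post k \<epsilon> \<sigma>''"
    using nsimp_covering_factor[OF \<sigma>] by blast
  define h where "h = cmp r1 \<alpha> \<epsilon>"
  have hm: "mor r1 mm h" unfolding h_def using mor_cmp[OF inj_mor_mor[OF vf(1)] \<alpha>] .
  obtain r ee \<delta> where f: "surj_mor r1 r ee" "inj_mor r mm \<delta>" "h = cmp r1 \<delta> ee"
    using mor_surj_inj_factor[OF hm] by blast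
  define \<tau> where "\<tau> = post k ee \<sigma>''"
  have ns\<tau>: "nsimp k r \<tau>" unfolding \<tau>_def using nsimp_post[OF vf(2) surj_mor_mor[OF f(1)]] .
  have rr1: "r \<le> r1" using surj_mor_dim_le[OF f(1)] .
  have r1q1: "r1 \<le> q1" using inj_mor_dim_le[OF vf(1)] .
  have xa: "sm X q1 mm \<alpha> y \<in> sc X q1" using sset_sm_closed[OF X \<alpha> y] .
  have dy: "sm X r mm \<delta> y \<in> sc X r" using sset_sm_closed[OF X inj_mor_mor[OF f(2)] y] .
  have "ez_lift W q1 (sm X q1 mm \<alpha> y) k \<sigma> = ez_lift W r1 (sm X r1 q1 \<epsilon> (sm X q1 mm \<alpha> y)) k \<sigma>''"
    using ez_lift_sm[OF q1 xa inj_mor_mor[OF vf(1)] vf(2)] vf(4) by simp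
  also have "sm X r1 q1 \<epsilon> (sm X q1 mm \<alpha> y) = sm X r1 r ee (sm X r mm \<delta> y)"
    using sset_sm_cmp[OF X inj_mor_mor[OF vf(1)] \<alpha> y] sset_sm_cmp[OF X surj_mor_mor[OF f(1)] inj_mor_mor[OF f(2)] y] f(3) h_def
    by simp
  also have "ez_lift W r1 (sm X r1 r ee (sm X r mm \<delta> y)) k \<sigma>'' = ez_lift W r (sm X r mm \<delta> y) k \<tau>"
    unfolding \<tau>_def using ez_lift_sm[OF _ dy surj_mor_mor[OF f(1)] vf(2)] rr1 r1q1 q1 by simp
  finally have wq: "ez_lift W q1 (sm X q1 mm \<alpha> y) k \<sigma> = ez_lift W r (sm X r mm \<delta> y) k \<tau>" .
  have pa: "post k \<alpha> \<sigma> = post k h \<sigma>''" unfolding h_def using vf(4) post_post[OF vf(2)] by simp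
  have "vert_values k (post k \<alpha> \<sigma>) = h ` {0..r1}" using pa vert_values_post vert_values_covers[OF vf(2,3)] by simp
  also have "\<dots> = \<delta> ` {0..r}" using f(3) cmp_image surj_mor_image[OF f(1)] by simp
  finally have vv: "\<delta> ` {0..r} = vert_values k (post k \<alpha> \<sigma>)" by simp
  have "post k \<delta> \<tau> = post k \<alpha> \<sigma>" unfolding \<tau>_def using pa f(3) post_post[OF vf(2)] by simp
  then show ?thesis using wq vv ns\<tau> f(2) rr1 r1q1 by (meson le_trans)
qed

lemma ez_lift_post_eq:
  assumes y: "y \<in> sc X mm" and q1: "q1 < M" and q2: "q2 < M"
    and \<alpha>1: "mor q1 mm \<alpha>1" and \<alpha>2: "mor q2 mm \<alpha>2"
    and \<sigma>1: "nsimp k q1 \<sigma>1" and \<sigma>2: "nsimp k q2 \<sigma>2"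
    and eq: "post k \<alpha>1 \<sigma>1 = post k \<alpha>2 \<sigma>2"
  shows "ez_lift W q1 (sm X q1 mm \<alpha>1 y) k \<sigma>1 = ez_lift W q2 (sm X q2 mm \<alpha>2 y) k \<sigma>2"
proof -
  obtain r1 \<delta>1 \<tau>1 where n1: "inj_mor r1 mm \<delta>1" "nsimp k r1 \<tau>1" "\<delta>1 ` {0..r1} = vert_values k (post k \<alpha>1 \<sigma>1)"
    "post k \<delta>1 \<tau>1 = post k \<alpha>1 \<sigma>1" "ez_lift W q1 (sm X q1 mm \<alpha>1 y) k \<sigma>1 = ez_lift W r1 (sm X r1 mm \<delta>1 y) k \<tau>1"
    using ez_lift_normal_form[OF y q1 \<alpha>1 \<sigma>1] by blast
  obtain r2 \<delta>2 \<tau>2 where n2: "inj_mor r2 mm \<delta>2" "nsimp k r2 \<tau>2" "\<delta>2 ` {0..r2} = vert_values k (post k \<alpha>2 \<sigma>2)"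
    "post k \<delta>2 \<tau>2 = post k \<alpha>2 \<sigma>2" "ez_lift W q2 (sm X q2 mm \<alpha>2 y) k \<sigma>2 = ez_lift W r2 (sm X r2 mm \<delta>2 y) k \<tau>2"
    using ez_lift_normal_form[OF y q2 \<alpha>2 \<sigma>2] by blast
  have "r1 = r2 \<and> \<delta>1 = \<delta>2" using inj_mor_unique[OF n1(1) n2(1)] n1(3) n2(3) eq by simp
  moreover then have "\<tau>1 = \<tau>2" using post_inj_mor_cancel[OF n1(1) n1(2)] n2(2) n1(4) n2(4) eq by simp
  ultimately show ?thesis using n1(5) n2(5) by simp
qed

lemma ez_lift_post_canon_chain:
  assumes y: "y \<in> sc X mm" and mmM: "mm \<le> M" and q': "q' < mm"
    and \<alpha>: "mor q' mm \<alpha>" and \<sigma>': "nsimp k q' \<sigma>'" and s: "mor (2 * k + 1) mm s"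
    and eq: "post k \<alpha> \<sigma>' = post k s (canon_chain k)"
  shows "ez_lift W q' (sm X q' mm \<alpha> y) k \<sigma>' = u k (sm X (2 * k + 1) mm s y)"
proof -
  have "\<not> covers mm (verts k (post k s (canon_chain k)))" using not_covers_post[OF q' \<alpha> \<sigma>'] eq by simp
  then obtain r \<delta> e where f: "r < mm" "inj_mor r mm \<delta>" "mor (2 * k + 1) r e" "s = cmp (2 * k + 1) \<delta> e"
    using canon_not_covers_factor[OF s] by blast
  have pe: "post k s (canon_chain k) = post k \<delta> (post k e (canon_chain k))" using f(4) post_post[OF nsimp_canon_chain] by simp
  have ns: "nsimp k r (post k e (canon_chain k))" using nsimp_post[OF nsimp_canon_chain f(3)] .
  have "ez_lift W q' (sm X q' mm \<alpha> y) k \<sigma>' = ez_lift W r (sm X r mm \<delta> y) k (post k e (canon_chain k))"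
    using ez_lift_post_eq[OF y _ _ \<alpha> inj_mor_mor[OF f(2)] \<sigma>' ns] eq pe q' f(1) mmM by simp
  also have "\<dots> = u k (sm X (2 * k + 1) r e (sm X r mm \<delta> y))"
    using ez_lift_canon_chain[OF _ sset_sm_closed[OF X inj_mor_mor[OF f(2)] y] f(3)] f(1) mmM by simp
  also have "\<dots> = u k (sm X (2 * k + 1) mm s y)"
    using sset_sm_cmp[OF X f(3) inj_mor_mor[OF f(2)] y] f(4) by simp
  finally show ?thesis .
qed

end

context
  fixes W m y
  assumes below: "cell_lifts_below W m" and y: "nondegenerate X m y"
begin

definition boundary_value :: "nat \<Rightarrow> (nat \<Rightarrow> nat \<times> nat) \<Rightarrow> 'e \<Rightarrow> bool" where
  "boundary_value k \<sigma> a \<longleftrightarrow>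
    (\<exists>q' \<alpha> \<sigma>'. q' < m \<and> mor q' m \<alpha> \<and> nsimp k q' \<sigma>' \<and> \<sigma> = post k \<alpha> \<sigma>' \<and>
       a = ez_lift W q' (sm X q' m \<alpha> y) k \<sigma>') \<or>
    (\<exists>s. mor (2 * k + 1) m s \<and> \<sigma> = post k s (canon_chain k) \<and> a = u k (sm X (2 * k + 1) m s y))"

lemma boundary_value_unique:
  assumes "boundary_value k \<sigma> a" "boundary_value k \<sigma> b"
  shows "a = b"
proof -
  have y_sc: "y \<in> sc X m" using nondegenerate_sc[OF y] .
  have face_esd: "ez_lift W q' (sm X q' m \<alpha> y) k \<sigma>' = u k (sm X (2 * k + 1) m s y)"
    if "q' < m" "mor q' m \<alpha>" "nsimp k q' \<sigma>'" "mor (2 * k + 1) m s"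
      "post k \<alpha> \<sigma>' = post k s (canon_chain k)" for q' \<alpha> \<sigma>' s
    using ez_lift_post_canon_chain[OF below y_sc order_refl that] .
  from assms show ?thesis
    unfolding boundary_value_def
  proof (elim disjE exE conjE)
    fix q1 \<alpha>1 \<sigma>1 q2 \<alpha>2 \<sigma>2
    assume "q1 < m" "mor q1 m \<alpha>1" "nsimp k q1 \<sigma>1" "\<sigma> = post k \<alpha>1 \<sigma>1" "a = ez_lift W q1 (sm X q1 m \<alpha>1 y) k \<sigma>1"
      "q2 < m" "mor q2 m \<alpha>2" "nsimp k q2 \<sigma>2" "\<sigma> = post k \<alpha>2 \<sigma>2" "b = ez_lift W q2 (sm X q2 m \<alpha>2 y) k \<sigma>2"
    then show "a = b" using ez_lift_post_eq[OF below y_sc] by metis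
  next
    fix q1 \<alpha>1 \<sigma>1 s
    assume "q1 < m" "mor q1 m \<alpha>1" "nsimp k q1 \<sigma>1" "\<sigma> = post k \<alpha>1 \<sigma>1" "a = ez_lift W q1 (sm X q1 m \<alpha>1 y) k \<sigma>1"
      "mor (2 * k + 1) m s" "\<sigma> = post k s (canon_chain k)" "b = u k (sm X (2 * k + 1) m s y)"
    then show "a = b" using face_esd by metis
  next
    fix q1 \<alpha>1 \<sigma>1 s
    assume "q1 < m" "mor q1 m \<alpha>1" "nsimp k q1 \<sigma>1" "\<sigma> = post k \<alpha>1 \<sigma>1" "b = ez_lift W q1 (sm X q1 m \<alpha>1 y) k \<sigma>1"
      "mor (2 * k + 1) m s" "\<sigma> = post k s (canon_chain k)" "a = u k (sm X (2 * k + 1) m s y)"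
    then show "a = b" using face_esd by metis
  next
    fix s1 s2
    assume "mor (2 * k + 1) m s1" "\<sigma> = post k s1 (canon_chain k)" "a = u k (sm X (2 * k + 1) m s1 y)"
      "mor (2 * k + 1) m s2" "\<sigma> = post k s2 (canon_chain k)" "b = u k (sm X (2 * k + 1) m s2 y)"
    then show "a = b" using post_canon_chain_inj by metis
  qed
qed

definition boundary_lift :: "nat \<Rightarrow> (nat \<Rightarrow> nat \<times> nat) \<Rightarrow> 'e" where
  "boundary_lift k \<sigma> = (SOME a. boundary_value k \<sigma> a)"

lemma boundary_lift_eq: "boundary_value k \<sigma> a \<Longrightarrow> boundary_lift k \<sigma> = a"
  unfolding boundary_lift_def by (metis someI boundary_value_unique)

lemma boundary_lift_face:
  "q' < m \<Longrightarrow> mor q' m \<alpha> \<Longrightarrow> nsimp k q' \<sigma>' \<Longrightarrow>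
    boundary_lift k (post k \<alpha> \<sigma>') = ez_lift W q' (sm X q' m \<alpha> y) k \<sigma>'"
  by (rule boundary_lift_eq) (auto simp: boundary_value_def)

lemma boundary_lift_esd:
  "mor (2 * k + 1) m s \<Longrightarrow> boundary_lift k (post k s (canon_chain k)) = u k (sm X (2 * k + 1) m s y)"
  by (rule boundary_lift_eq) (auto simp: boundary_value_def)

lemma boundary_lift_natural:
  assumes \<beta>: "mor l k \<beta>" and \<sigma>: "(k, \<sigma>) \<in> nerve_simplices m (base_chains m)"
  shows "boundary_lift l (pre l \<beta> \<sigma>) = sm E l k \<beta> (boundary_lift k \<sigma>)"
proof -
  have y_sc: "y \<in> sc X m" using nondegenerate_sc[OF y] .
  from \<sigma> have "nsimp k m \<sigma>" "verts k \<sigma> \<in> base_chains m" unfolding nerve_simplices_def by auto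
  then show ?thesis
  proof (cases rule: base_chains_cases)
    case (face q' \<alpha> \<sigma>')
    have "boundary_lift l (pre l \<beta> \<sigma>) = ez_lift W q' (sm X q' m \<alpha> y) l (pre l \<beta> \<sigma>')"
      using boundary_lift_face[OF face(1,2) nsimp_pre[OF face(3) \<beta>]] face(4) pre_post[OF \<beta>] by simp
    also have "\<dots> = sm E l k \<beta> (ez_lift W q' (sm X q' m \<alpha> y) k \<sigma>')"
      using ez_lift_natural[OF below face(1) sset_sm_closed[OF X face(2) y_sc] face(3) \<beta>] .
    finally show ?thesis using boundary_lift_face[OF face(1-3)] face(4) by simp
  next
    case (esd s)
    let ?s' = "cmp (2 * l + 1) s (join_self l k \<beta>)"
    have "boundary_lift l (pre l \<beta> \<sigma>) = u l (sm X (2 * l + 1) m ?s' y)"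
      using boundary_lift_esd[OF mor_cmp[OF mor_join_self[OF \<beta>] esd(1)]] esd(2)
        pre_post_canon_chain[OF \<beta> esd(1)] by simp
    also have "\<dots> = u l (sm X (2 * l + 1) (2 * k + 1) (join_self l k \<beta>) (sm X (2 * k + 1) m s y))"
      using sset_sm_cmp[OF X mor_join_self[OF \<beta>] esd(1) y_sc] by simp
    also have "\<dots> = sm E l k \<beta> (u k (sm X (2 * k + 1) m s y))"
      using u_natural[OF \<beta> sset_sm_closed[OF X esd(1) y_sc]] .
    finally show ?thesis using boundary_lift_esd[OF esd(1)] esd(2) by simp
  qed
qed

lemma boundary_lift_nerve_lift:
  "nerve_lift E p (\<lambda>k \<sigma>. v k (eclass X k (m, y, \<sigma>))) m (base_chains m) boundary_lift"
proof -
  have y_sc: "y \<in> sc X m" using nondegenerate_sc[OF y] .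
  have "boundary_lift k \<sigma> \<in> sc E k \<and> p k (boundary_lift k \<sigma>) = v k (eclass X k (m, y, \<sigma>))"
    if "(k, \<sigma>) \<in> nerve_simplices m (base_chains m)" for k \<sigma>
  proof -
    from that have "nsimp k m \<sigma>" "verts k \<sigma> \<in> base_chains m" unfolding nerve_simplices_def by auto
    then show ?thesis
    proof (cases rule: base_chains_cases)
      case (face q' \<alpha> \<sigma>')
      then show ?thesis
        using boundary_lift_face[OF face(1-3)] sset_sm_closed[OF X face(2) y_sc]
          ez_lift_sc[OF below face(1) _ face(3)] ez_lift_p[OF below face(1) _ face(3)]
          eclass_coend_step[OF face(2) y_sc face(3)] by simp
    next
      case (esd s)
      then show ?thesis
        using boundary_lift_esd[OF esd(1)] sset_sm_closed[OF X esd(1) y_sc] u_sc u_v_canon_chain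
          eclass_coend_step[OF esd(1) y_sc nsimp_canon_chain] by simp
    qed
  qed
  then show ?thesis
    unfolding nerve_lift_def nerve_map_on_def using boundary_lift_natural by blast
qed

lemma cell_lift_exists: "\<exists>F. cell_lift m y F W"
proof -
  obtain F where F: "nerve_lift E p (\<lambda>k \<sigma>. v k (eclass X k (m, y, \<sigma>))) m UNIV F"
    "\<forall>k \<sigma>. (k, \<sigma>) \<in> nerve_simplices m (base_chains m) \<longrightarrow> F k \<sigma> = boundary_lift k \<sigma>"
    using extend_to_nerve[OF fib boundary_lift_nerve_lift eclass_nerve_map[OF X v nondegenerate_sc[OF y]]]
    by blast
  have "F k (post k \<alpha> \<sigma>') = ez_lift W q' (sm X q' m \<alpha> y) k \<sigma>'"
    if "q' < m" "mor q' m \<alpha>" "nsimp k q' \<sigma>'" for q' \<alpha> k \<sigma>'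
  proof -
    have "(k, post k \<alpha> \<sigma>') \<in> nerve_simplices m (base_chains m)"
      using not_covers_post[OF that] nsimp_post[OF that(3,2)]
      unfolding nerve_simplices_def base_chains_def by blast
    then show ?thesis using F(2) boundary_lift_face[OF that] by simp
  qed
  moreover have "F k (post k s (canon_chain k)) = u k (sm X (2 * k + 1) m s y)"
    if "mor (2 * k + 1) m s" for k s
  proof -
    have "(k, post k s (canon_chain k)) \<in> nerve_simplices m (base_chains m)"
      using esd_chain_post_canon_chain[OF that] nsimp_post[OF nsimp_canon_chain that]
      unfolding nerve_simplices_def base_chains_def by blast
    then show ?thesis using F(2) boundary_lift_esd[OF that] by simp
  qed
  ultimately show ?thesis using F(1) unfolding cell_lift_def by blast
qed

end

primrec cell_lifts_upto :: "nat \<Rightarrow> nat \<Rightarrow> 'a \<Rightarrow> nat \<Rightarrow> (nat \<Rightarrow> nat \<times> nat) \<Rightarrow> 'e" where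
  "cell_lifts_upto 0 = (\<lambda>_. undefined)"
| "cell_lifts_upto (Suc n) =
    (cell_lifts_upto n)(n := (\<lambda>y. SOME F. cell_lift n y F (cell_lifts_upto n)))"

definition cell_lifts :: "nat \<Rightarrow> 'a \<Rightarrow> nat \<Rightarrow> (nat \<Rightarrow> nat \<times> nat) \<Rightarrow> 'e" where
  "cell_lifts q = cell_lifts_upto (Suc q) q"

lemma cell_lifts_upto_eq: "q < n \<Longrightarrow> cell_lifts_upto n q = cell_lifts q"
  by (induction n) (auto simp: cell_lifts_def less_Suc_eq)

lemma ez_lift_cong:
  assumes x: "x \<in> sc X q" and agree: "\<And>q0. q0 \<le> q \<Longrightarrow> W q0 = W' q0"
  shows "ez_lift W q x = ez_lift W' q x"
proof -
  obtain q0 s y where "ez_decomp X q x = (q0, s, y)" "surj_mor q q0 s"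
    using ez_decompE[OF X x] by blast
  then show ?thesis using agree[of q0] surj_mor_dim_le by (auto simp: ez_lift_def fun_eq_iff)
qed

lemma cell_lift_cong:
  assumes y: "y \<in> sc X m" and agree: "\<And>q. q < m \<Longrightarrow> W q = W' q"
  shows "cell_lift m y F W = cell_lift m y F W'"
proof -
  have "ez_lift W q' (sm X q' m \<alpha> y) = ez_lift W' q' (sm X q' m \<alpha> y)" if "q' < m" "mor q' m \<alpha>" for q' \<alpha>
  proof (rule ez_lift_cong[OF sset_sm_closed[OF X that(2) y]])
    fix q0 assume "q0 \<le> q'"
    then show "W q0 = W' q0" using agree that(1) by simp
  qed
  then show ?thesis unfolding cell_lift_def by auto
qed

lemma cell_lifts_below_cong:
  assumes "\<And>q. q < M \<Longrightarrow> W q = W' q"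
  shows "cell_lifts_below W M = cell_lifts_below W' M"
proof -
  have "cell_lift q y (W q y) W = cell_lift q y (W' q y) W'" if "q < M" "nondegenerate X q y" for q y
    using cell_lift_cong[OF nondegenerate_sc[OF that(2)], of W W' "W q y"] assms that by simp
  then show ?thesis unfolding cell_lifts_below_def by blast
qed

lemma cell_lifts_below_cell_lifts: "cell_lifts_below cell_lifts M"
proof (induction M)
  case 0
  show ?case by (simp add: cell_lifts_below_def)
next
  case (Suc M)
  have below: "cell_lifts_below (cell_lifts_upto M) M"
    using cell_lifts_below_cong[of M "cell_lifts_upto M" cell_lifts] cell_lifts_upto_eq Suc.IH by simp
  have "cell_lift M y (cell_lifts M y) cell_lifts" if y: "nondegenerate X M y" for y
  proof -
    have "cell_lift M y (SOME F. cell_lift M y F (cell_lifts_upto M)) (cell_lifts_upto M)"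
      using cell_lift_exists[OF below y] by (rule someI_ex)
    then have "cell_lift M y (cell_lifts M y) (cell_lifts_upto M)"
      by (simp add: cell_lifts_def)
    then show ?thesis
      using cell_lift_cong[OF nondegenerate_sc[OF y], of "cell_lifts_upto M" cell_lifts] cell_lifts_upto_eq
      by simp
  qed
  then show ?case using Suc.IH unfolding cell_lifts_below_def using less_Suc_eq by auto
qed

definition triple_lift :: "nat \<Rightarrow> 'a etriple \<Rightarrow> 'e" where
  "triple_lift k t = (case t of (m, x, \<sigma>) \<Rightarrow> ez_lift cell_lifts m x k \<sigma>)"

lemma triple_lift_coend_step: "coend_step X k s t \<Longrightarrow> triple_lift k s = triple_lift k t"
proof -
  assume "coend_step X k s t"
  then obtain m m' \<alpha> x \<sigma> where a: "mor m m' \<alpha>" "x \<in> sc X m'" "nsimp k m \<sigma>"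
    "s = (m, sm X m m' \<alpha> x, \<sigma>)" "t = (m', x, post k \<alpha> \<sigma>)"
    unfolding coend_step_def by blast
  show ?thesis unfolding triple_lift_def a(4,5)
    using ez_lift_sm[OF cell_lifts_below_cell_lifts[of "Suc m'"] _ a(2) a(1) a(3)] by simp
qed

lemma triple_lift_coend_eq: "coend_eq X k s t \<Longrightarrow> triple_lift k s = triple_lift k t"
  unfolding coend_eq_def
  by (induction rule: rtranclp_induct) (auto dest: triple_lift_coend_step)

definition coend_lift :: "nat \<Rightarrow> 'a etriple set \<Rightarrow> 'e" where
  "coend_lift k c = triple_lift k (SOME t. t \<in> c)"

lemma coend_lift_eclass: "t \<in> etriples X k \<Longrightarrow> coend_lift k (eclass X k t) = triple_lift k t"
proof -
  assume t: "t \<in> etriples X k"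
  have "(SOME t'. t' \<in> eclass X k t) \<in> eclass X k t" using eclass_self[OF t] by (rule someI)
  then have "coend_eq X k t (SOME t'. t' \<in> eclass X k t)" unfolding eclass_def by simp
  then show ?thesis unfolding coend_lift_def using triple_lift_coend_eq by metis
qed

lemma coend_lift_eclass_eq: "x \<in> sc X m \<Longrightarrow> nsimp k m \<sigma> \<Longrightarrow> coend_lift k (eclass X k (m, x, \<sigma>)) = ez_lift cell_lifts m x k \<sigma>"
  using coend_lift_eclass[OF etriplesI] by (simp add: triple_lift_def)

lemma coend_lift_sset_map: "sset_map (ESd' X) E coend_lift"
  unfolding sset_map_def
proof (intro conjI allI impI)
  fix n c assume "c \<in> sc (ESd' X) n"
  then obtain m x \<sigma> where "x \<in> sc X m" "nsimp n m \<sigma>" "c = eclass X n (m, x, \<sigma>)" by (rule sc_ESd'E)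
  then show "coend_lift n c \<in> sc E n"
    using coend_lift_eclass_eq ez_lift_sc[OF cell_lifts_below_cell_lifts[of "Suc m"]] by simp
next
  fix n k \<beta> c assume a: "mor n k \<beta> \<and> c \<in> sc (ESd' X) k"
  then obtain m x \<sigma> where x: "x \<in> sc X m" and \<sigma>: "nsimp k m \<sigma>" and c: "c = eclass X k (m, x, \<sigma>)"
    by (auto elim: sc_ESd'E)
  have \<beta>: "mor n k \<beta>" using a by simp
  have "coend_lift n (sm (ESd' X) n k \<beta> c) = ez_lift cell_lifts m x n (pre n \<beta> \<sigma>)"
    using sm_ESd'_eclass[OF X etriplesI[OF x \<sigma>] \<beta>] coend_lift_eclass_eq[OF x nsimp_pre[OF \<sigma> \<beta>]] c
    by (simp add: pre_triple_def)
  also have "\<dots> = sm E n k \<beta> (coend_lift k c)"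
    using ez_lift_natural[OF cell_lifts_below_cell_lifts[of "Suc m"] _ x \<sigma> \<beta>] coend_lift_eclass_eq[OF x \<sigma>] c
    by simp
  finally show "coend_lift n (sm (ESd' X) n k \<beta> c) = sm E n k \<beta> (coend_lift k c)" .
qed

lemma coend_lift_canon: "a \<in> sc (ESd X) n \<Longrightarrow> coend_lift n (canon X n a) = u n a"
proof -
  assume "a \<in> sc (ESd X) n"
  then have a: "a \<in> sc X (2 * n + 1)" unfolding ESd_def by simp
  have "coend_lift n (canon X n a) = ez_lift cell_lifts (2 * n + 1) a n (post n (idm (2 * n + 1)) (canon_chain n))"
    unfolding canon_eclass using coend_lift_eclass_eq[OF a nsimp_canon_chain] post_idm[OF nsimp_canon_chain]
    by simp
  also have "\<dots> = u n a"
    using ez_lift_canon_chain[OF cell_lifts_below_cell_lifts[of "Suc (2 * n + 1)"] _ a mor_idm]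
      sset_sm_idm[OF X a] by simp
  finally show ?thesis .
qed

lemma coend_lift_p: "c \<in> sc (ESd' X) n \<Longrightarrow> p n (coend_lift n c) = v n c"
proof (erule sc_ESd'E)
  fix m x \<sigma> assume "x \<in> sc X m" "nsimp n m \<sigma>" "c = eclass X n (m, x, \<sigma>)"
  then show ?thesis
    using coend_lift_eclass_eq ez_lift_p[OF cell_lifts_below_cell_lifts[of "Suc m"]] by simp
qed

end

theorem proposition8p23:
  fixes X :: "'a sset"
  assumes "sset X"
  shows "sset_map (ESd X) (ESd' X) (canon X) \<and>
         (\<forall>(E :: 'e sset) (B :: 'b sset) p. inner_fibration E B p \<longrightarrow>
             llp (ESd X) (ESd' X) (canon X) E B p)"
proof (intro conjI allI impI)
  show "sset_map (ESd X) (ESd' X) (canon X)" using canon_sset_map[OF assms] .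
next
  fix E :: "'e sset" and B :: "'b sset" and p
  assume fib: "inner_fibration E B p"
  show "llp (ESd X) (ESd' X) (canon X) E B p"
    unfolding llp_def
  proof (intro allI impI)
    fix u v
    assume "sset_map (ESd X) E u \<and> sset_map (ESd' X) B v \<and>
      (\<forall>n a. a \<in> sc (ESd X) n \<longrightarrow> p n (u n a) = v n (canon X n a))"
    then interpret lifting_problem X E B p u v
      using assms fib by unfold_locales auto
    show "\<exists>w. sset_map (ESd' X) E w \<and> (\<forall>n a. a \<in> sc (ESd X) n \<longrightarrow> w n (canon X n a) = u n a) \<and>
        (\<forall>n x. x \<in> sc (ESd' X) n \<longrightarrow> p n (w n x) = v n x)"
      using coend_lift_sset_map coend_lift_canon coend_lift_p by blast
  qed
qed

end
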